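(* Let $(\mathcal X,\rho)$ be a non-empty Polish metric space with Borel $\sigma$-field $\mathfrak B(\mathcal X)$, and let $\mathcal Y\in\mathfrak B(\mathcal X)$ satisfy $$c_{x,0}\,s^{-\gamma}\le \log \mathcal N_{\mathcal X}(s,\mathcal Y,\rho)\le c_{x,1}\,s^{-\gamma}\qquad\text{for all } s\in(0,s_0),$$ for constants $s_0>0$, $0<c_{x,0}<c_{x,1}$, $\gamma>0$. Fix $C>0$, $\beta\in(0,1]$. For $\kappa>0$ let $\mathcal P_{C,\beta,\kappa}$ be the set of pairs $(P_X,P_Y)$ of probability measures on $\mathfrak B(\mathcal X)$ with $P_X(\mathcal Y)=P_Y(\mathcal Y)=1$, $\operatorname{TV}(P_X,P_Y)\ge\kappa$, and such that there is a Borel set $\mathcal Y_0\subseteq\mathcal Y$ with $(P_X+P_Y)(\mathcal Y_0)=2$ and $|p_X(y)-p_X(z)|\le C\rho(y,z)^\beta$ for all $y,z\in\mathcal Y_0$, where $p_X=\mathrm dP_X/\mathrm d(P_X+P_Y)$. Supervised classification model: the training sample $(Z_1,W_1),\dots,(Z_n,W_n)$ is i.i.d., $W_j\in\{0,1\}$, $P[W_1=1]=w$ for a fixed $w\in(0,1)$, and conditionally on $W_j=0$ (resp. $W_j=1$) $Z_j$ has law $P_X$ (resp. $P_Y$); an observation $Z$, independent of the training sample, has law $P_X$ or $P_Y$. A classifier $\varphi_n$ is a Borel measurable map $\mathcal X^n\times\{0,1\}^n\times\mathcal X\to\{0,1\}$ evaluated at $(Z_1,\dots,Z_n,W_1,\dots,W_n,Z)$.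 Its excess risk is $$\mathcal E_n(\varphi_n)=\sup_{(P_X,P_Y)\in\mathcal P_{C,\beta,\kappa}}\big(P_{X,Y,X}[\varphi_n=1]+P_{X,Y,Y}[\varphi_n=0]-1+\operatorname{TV}(P_X,P_Y)\big),$$ where $P_{X,Y,X}$, $P_{X,Y,Y}$ denote the probability when $Z$ has law $P_X$, respectively $P_Y$. Then there exists $\kappa_0>0$ (not depending on $n$) such that for every $\kappa\in(0,\kappa_0)$ and every sequence of classifiers $\{\varphi_n\}_n$, $$\liminf_{n\to\infty}(\log n)^{\beta/\gamma}\,\mathcal E_n(\varphi_n)>0.$$
   Context: $\mathcal N_{\mathcal X}(\delta,\mathcal Y,\rho)$ denotes the minimal number of open $\rho$-balls in $\mathcal X$ of radius $\delta$ whose union contains $\mathcal Y$. $\operatorname{TV}(P,Q)=\sup_{A\in\mathfrak B(\mathcal X)}|P(A)-Q(A)|$. *)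

theory Defs
  imports "HOL-Probability.Probability"
begin

text \<open>If no finite cover exists the Inf of the
  empty set of naturals is 0; under the hypotheses of the theorem this never happens.\<close>
definition covering_number :: "real \<Rightarrow> 'a::metric_space set \<Rightarrow> nat" where
  "covering_number d Y = Inf {card C | C. finite C \<and> Y \<subseteq> (\<Union>c\<in>C. ball c d)}"

definition tv_dist :: "'a::topological_space measure \<Rightarrow> 'a measure \<Rightarrow> real" where
  "tv_dist P Q = (SUP A\<in>sets borel. \<bar>measure P A - measure Q A\<bar>)"

definition measure_add :: "'a measure \<Rightarrow> 'a measure \<Rightarrow> 'a measure" where
  "measure_add M N = measure_of (space M) (sets M) (\<lambda>A. emeasure M A + emeasure N A)"

definition borel_prob :: "'a::topological_space measure \<Rightarrow> bool" where
  "borel_prob P \<longleftrightarrow> prob_space P \<and> sets P = sets borel"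

definition model_class ::
  "'a::metric_space set \<Rightarrow> real \<Rightarrow> real \<Rightarrow> real \<Rightarrow> ('a measure \<times> 'a measure) set" where
  "model_class Y C \<beta> \<kappa> = {(PX, PY). borel_prob PX \<and> borel_prob PY \<and>
     measure PX Y = 1 \<and> measure PY Y = 1 \<and> tv_dist PX PY \<ge> \<kappa> \<and>
     (\<exists>Y0 \<in> sets borel. Y0 \<subseteq> Y \<and> measure (measure_add PX PY) Y0 = 2 \<and>
        (\<forall>y\<in>Y0. \<forall>z\<in>Y0.
           \<bar>enn2real (RN_deriv (measure_add PX PY) PX y) - enn2real (RN_deriv (measure_add PX PY) PX z)\<bar>
             \<le> C * dist y z powr \<beta>))}"

text \<open>Measurable space of the inputs of a classifier with n training points:
  (Z_1..Z_n, W_1..W_n), Z.  W_j = True encodes label 1.\<close>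
definition classifier_space :: "nat \<Rightarrow> (((nat \<Rightarrow> 'a::topological_space) \<times> (nat \<Rightarrow> bool)) \<times> 'a) measure" where
  "classifier_space n = (PiM {..<n} (\<lambda>_. borel) \<Otimes>\<^sub>M PiM {..<n} (\<lambda>_. count_space UNIV)) \<Otimes>\<^sub>M borel"

definition is_classifier :: "nat \<Rightarrow> ((nat \<Rightarrow> 'a::topological_space) \<Rightarrow> (nat \<Rightarrow> bool) \<Rightarrow> 'a \<Rightarrow> bool) \<Rightarrow> bool" where
  "is_classifier n \<phi> \<longleftrightarrow> (\<lambda>((zs, ws), z). \<phi> zs ws z) \<in> measurable (classifier_space n) (count_space UNIV)"

text \<open>Probability that phi outputs label v when the training sample is i.i.d. with
  W_j ~ Bernoulli(w), Z_j | W_j=0 ~ PX, Z_j | W_j=1 ~ PY, and the independent test point Z ~ PZ.\<close>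
definition prob_output ::
  "nat \<Rightarrow> real \<Rightarrow> 'a::topological_space measure \<Rightarrow> 'a measure \<Rightarrow> 'a measure \<Rightarrow>
   ((nat \<Rightarrow> 'a) \<Rightarrow> (nat \<Rightarrow> bool) \<Rightarrow> 'a \<Rightarrow> bool) \<Rightarrow> bool \<Rightarrow> real" where
  "prob_output n w PX PY PZ \<phi> v =
     (\<Sum>ws\<in>PiE {..<n} (\<lambda>_. UNIV :: bool set).
        w ^ card {j\<in>{..<n}. ws j} * (1 - w) ^ card {j\<in>{..<n}. \<not> ws j} *
        measure (PiM {..<n} (\<lambda>j. if ws j then PY else PX) \<Otimes>\<^sub>M PZ)
          {(zs, z) \<in> space (PiM {..<n} (\<lambda>j. if ws j then PY else PX) \<Otimes>\<^sub>M PZ). \<phi> zs ws z = v})"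

definition excess_risk ::
  "'a::metric_space set \<Rightarrow> real \<Rightarrow> real \<Rightarrow> real \<Rightarrow> nat \<Rightarrow> real \<Rightarrow>
   ((nat \<Rightarrow> 'a) \<Rightarrow> (nat \<Rightarrow> bool) \<Rightarrow> 'a \<Rightarrow> bool) \<Rightarrow> real" where
  "excess_risk Y C \<beta> \<kappa> n w \<phi> =
     (SUP (PX, PY) \<in> model_class Y C \<beta> \<kappa>.
        prob_output n w PX PY PX \<phi> True + prob_output n w PX PY PY \<phi> False - 1 + tv_dist PX PY)"

end

theory Submission
  imports Defs
begin

text \<open>An Assouad-type argument. At scale \<open>s\<close> the covering bound yields \<open>exp (c0 s\<^sup>-\<^sup>\<gamma>)\<close> points of
  \<open>Y\<close> that are \<open>s\<close>-separated; taking \<open>s = (c0 / log (12n + 12))\<^sup>1\<^sup>/\<^sup>\<gamma>\<close> gives \<open>12n + 12\<close> of them.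
  Keep two far-apart anchors, which carry half of the mass and put \<open>PX\<close>, \<open>PY\<close> at total variation
  \<open>\<ge> \<kappa>\<close>, and \<open>2K = 4n + 4\<close> of the points as cells of mass \<open>1/(4K)\<close>, grouped in pairs on which the
  regression function is \<open>1/2 \<plusminus> h\<close>, \<open>h = C s\<^sup>\<beta>/2\<close>, with signs chosen by \<open>\<sigma> \<in> {0,1}\<^sup>K\<close>; the
  separation keeps the regression function \<open>\<beta>\<close>-Hoelder with constant \<open>C\<close>. A pair has mass
  \<open>1/(2K) \<le> 1/(4n)\<close>, so with probability \<open>\<ge> 3/4\<close> the sample never visits it and cannot tell \<open>\<sigma>\<close>
  from \<open>\<sigma>\<close> with the \<open>k\<close>-th sign flipped. Averaging over the hypercube, every classifier has
  excess risk \<open>\<ge> 3h/8\<close>, of order \<open>(log n)\<^sup>-\<^sup>\<beta>\<^sup>/\<^sup>\<gamma>\<close>.\<close>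

section \<open>Finitely supported measures\<close>

definition discrete_measure :: "'a set \<Rightarrow> ('a \<Rightarrow> real) \<Rightarrow> 'a::t1_space measure" where
  "discrete_measure S m = distr (point_measure S (\<lambda>x. ennreal (m x))) borel id"

lemma sets_discrete_measure [simp, measurable_cong]: "sets (discrete_measure S m) = sets borel"
  by (simp add: discrete_measure_def)

lemma space_discrete_measure [simp]: "space (discrete_measure S m) = UNIV"
  by (simp add: discrete_measure_def)

lemma finite_imp_borel: "finite (A :: 'a::t1_space set) \<Longrightarrow> A \<in> sets borel"
  by (simp add: borel_closed finite_imp_closed)

lemma emeasure_discrete_measure:
  assumes "finite S" "A \<in> sets borel"
  shows "emeasure (discrete_measure S m) A = (\<Sum>x\<in>S\<inter>A. ennreal (m x))"
proof -
  let ?P = "point_measure S (\<lambda>x. ennreal (m x))"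
  have "emeasure (discrete_measure S m) A = emeasure ?P (id -` A \<inter> space ?P)"
    unfolding discrete_measure_def using assms
    by (intro emeasure_distr) (auto simp: measurable_count_space_eq1 space_point_measure)
  also have "\<dots> = (\<Sum>x\<in>S\<inter>A. ennreal (m x))"
    using assms by (subst emeasure_point_measure_finite) (auto simp: space_point_measure intro: sum.cong)
  finally show ?thesis .
qed

lemma measure_discrete_measure:
  assumes "finite S" "A \<in> sets borel" "\<And>x. x \<in> S \<Longrightarrow> m x \<ge> 0"
  shows "measure (discrete_measure S m) A = (\<Sum>x\<in>S\<inter>A. m x)"
proof -
  have "(\<Sum>x\<in>S\<inter>A. ennreal (m x)) = ennreal (\<Sum>x\<in>S\<inter>A. m x)"
    using assms by (intro sum_ennreal) auto
  moreover have "0 \<le> (\<Sum>x\<in>S\<inter>A. m x)" using assms by (intro sum_nonneg) auto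
  ultimately show ?thesis using assms by (simp add: measure_def emeasure_discrete_measure)
qed

lemma discrete_measure_cong:
  "finite S \<Longrightarrow> (\<And>x. x \<in> S \<Longrightarrow> m x = m' x) \<Longrightarrow> discrete_measure S m = discrete_measure S m'"
  by (rule measure_eqI) (auto simp: emeasure_discrete_measure intro: sum.cong)

lemma finite_measure_discrete_measure:
  "finite S \<Longrightarrow> finite_measure (discrete_measure S m)"
  by (rule finite_measureI) (simp add: emeasure_discrete_measure)

lemma borel_prob_discrete_measure:
  assumes "finite S" "\<And>x. x \<in> S \<Longrightarrow> m x \<ge> 0" "(\<Sum>x\<in>S. m x) = 1"
  shows "borel_prob (discrete_measure S m)"
  unfolding borel_prob_def
proof
  show "prob_space (discrete_measure S m)"
    by (rule prob_spaceI) (use assms in \<open>simp add: emeasure_discrete_measure sum_ennreal\<close>)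
qed simp

lemma nn_integral_discrete_measure:
  assumes "finite S"
  shows "(\<integral>\<^sup>+x. f x \<partial>discrete_measure S m) = (\<Sum>y\<in>S. ennreal (m y) * f y)"
proof -
  have "AE x in discrete_measure S m. x \<in> S"
  proof (rule AE_I[where N="UNIV - S"])
    have "UNIV - S \<in> sets borel"
      using assms by (intro borel_open open_Diff finite_imp_closed) auto
    then show "UNIV - S \<in> sets (discrete_measure S m)"
      and "emeasure (discrete_measure S m) (UNIV - S) = 0"
      using assms by (simp_all add: emeasure_discrete_measure)
  qed auto
  then have "(\<integral>\<^sup>+x. f x \<partial>discrete_measure S m) =
      (\<integral>\<^sup>+x. (\<Sum>y\<in>S. f y * indicator {y} x) \<partial>discrete_measure S m)"
  proof (intro nn_integral_cong_AE, eventually_elim)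
    case (elim x)
    then have "(\<Sum>y\<in>S. f y * indicator {y} x) = (\<Sum>y\<in>S. if y = x then f x else 0)"
      by (intro sum.cong) (auto simp: indicator_def)
    also have "\<dots> = f x" using elim assms by simp
    finally show ?case by simp
  qed
  also have "\<dots> = (\<Sum>y\<in>S. (\<integral>\<^sup>+x. f y * indicator {y} x \<partial>discrete_measure S m))"
    by (intro nn_integral_sum) auto
  also have "\<dots> = (\<Sum>y\<in>S. ennreal (m y) * f y)"
    using assms by (intro sum.cong refl)
      (auto simp: nn_integral_cmult_indicator emeasure_discrete_measure finite_imp_borel
        mult.commute Int_absorb1 cong: if_cong)
  finally show ?thesis .
qed

lemma measure_space_emeasure_add:
  assumes "sets M = sets N"
  shows "measure_space (space M) (sets M) (\<lambda>A. emeasure M A + emeasure N A)"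
  unfolding measure_space_def
proof (intro conjI)
  show "sigma_algebra (space M) (sets M)" by (rule sets.sigma_algebra_axioms)
  show "positive (sets M) (\<lambda>A. emeasure M A + emeasure N A)"
    by (simp add: positive_def)
  show "countably_additive (sets M) (\<lambda>A. emeasure M A + emeasure N A)"
    unfolding countably_additive_def
  proof (intro allI impI)
    fix A :: "nat \<Rightarrow> _"
    assume A: "range A \<subseteq> sets M" "disjoint_family A" "\<Union> (range A) \<in> sets M"
    have "(\<Sum>i. emeasure M (A i) + emeasure N (A i)) = (\<Sum>i. emeasure M (A i)) + (\<Sum>i. emeasure N (A i))"
      by (rule suminf_add[symmetric]) auto
    also have "\<dots> = emeasure M (\<Union> (range A)) + emeasure N (\<Union> (range A))"
      using A assms by (simp add: suminf_emeasure)
    finally show "(\<Sum>i. emeasure M (A i) + emeasure N (A i)) =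
        emeasure M (\<Union> (range A)) + emeasure N (\<Union> (range A))" .
  qed
qed

lemma sets_measure_add [simp]: "sets (measure_add M N) = sets M"
  unfolding measure_add_def by simp

lemma emeasure_measure_add:
  assumes "sets M = sets N" "A \<in> sets M"
  shows "emeasure (measure_add M N) A = emeasure M A + emeasure N A"
  unfolding measure_add_def
  using measure_space_emeasure_add[OF assms(1)] assms(2)
  by (intro emeasure_measure_of_sigma) (auto simp: measure_space_def)

lemma measure_add_discrete_measure:
  assumes "finite S" "\<And>x. x \<in> S \<Longrightarrow> a x \<ge> 0" "\<And>x. x \<in> S \<Longrightarrow> b x \<ge> 0"
  shows "measure_add (discrete_measure S a) (discrete_measure S b) = discrete_measure S (\<lambda>x. a x + b x)"
proof (rule measure_eqI)
  fix A assume "A \<in> sets (measure_add (discrete_measure S a) (discrete_measure S b))"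
  then show "emeasure (measure_add (discrete_measure S a) (discrete_measure S b)) A =
      emeasure (discrete_measure S (\<lambda>x. a x + b x)) A"
    using assms
    by (simp add: emeasure_measure_add emeasure_discrete_measure sum.distrib[symmetric] ennreal_plus)
qed simp

lemma density_discrete_measure:
  assumes S: "finite S" and "\<And>x. x \<in> S \<Longrightarrow> m x \<ge> 0" "\<And>x. x \<in> S \<Longrightarrow> f x \<ge> 0"
  shows "density (discrete_measure S m) (\<lambda>x. \<Sum>y\<in>S. ennreal (f y) * indicator {y} x) =
    discrete_measure S (\<lambda>x. m x * f x)"
proof (rule measure_eqI)
  let ?f = "\<lambda>x. \<Sum>y\<in>S. ennreal (f y) * indicator {y} x"
  have f_at: "?f y = ennreal (f y)" if "y \<in> S" for y
  proof -
    have "?f y = (\<Sum>z\<in>S. if z = y then ennreal (f y) else 0)"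
      by (intro sum.cong) (auto simp: indicator_def)
    then show ?thesis using that S by simp
  qed
  fix A assume "A \<in> sets (density (discrete_measure S m) ?f)"
  then have A: "A \<in> sets borel" by simp
  have "emeasure (density (discrete_measure S m) ?f) A = (\<integral>\<^sup>+y. ?f y * indicator A y \<partial>discrete_measure S m)"
    using A by (intro emeasure_density) (auto simp: finite_imp_borel)
  also have "\<dots> = (\<Sum>y\<in>S. ennreal (m y) * (?f y * indicator A y))"
    using S by (rule nn_integral_discrete_measure)
  also have "\<dots> = (\<Sum>y\<in>S. ennreal (m y * f y) * indicator A y)"
  proof (intro sum.cong refl)
    fix y assume y: "y \<in> S"
    show "ennreal (m y) * (?f y * indicator A y) = ennreal (m y * f y) * indicator A y"
      using assms y by (simp only: f_at[OF y]) (simp add: ennreal_mult mult.assoc)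
  qed
  also have "\<dots> = emeasure (discrete_measure S (\<lambda>x. m x * f x)) A"
    using S A by (simp add: emeasure_discrete_measure sum.inter_restrict indicator_def if_distrib cong: if_cong)
  finally show "emeasure (density (discrete_measure S m) ?f) A = emeasure (discrete_measure S (\<lambda>x. m x * f x)) A" .
qed simp

lemma RN_deriv_discrete_measure:
  assumes S: "finite S" and a: "\<And>x. x \<in> S \<Longrightarrow> a x \<ge> 0" and b: "\<And>x. x \<in> S \<Longrightarrow> b x \<ge> 0"
    and pos: "\<And>x. x \<in> S \<Longrightarrow> a x + b x > 0" and x: "x \<in> S"
  shows "RN_deriv (measure_add (discrete_measure S a) (discrete_measure S b)) (discrete_measure S a) x =
    ennreal (a x / (a x + b x))"
proof -
  define M where "M = discrete_measure S (\<lambda>x. a x + b x)"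
  define f where "f x = (\<Sum>y\<in>S. ennreal (a y / (a y + b y)) * indicator {y} x)" for x
  have f_at: "f y = ennreal (a y / (a y + b y))" if "y \<in> S" for y
  proof -
    have "f y = (\<Sum>z\<in>S. if z = y then ennreal (a y / (a y + b y)) else 0)"
      unfolding f_def by (intro sum.cong) (auto simp: indicator_def)
    then show ?thesis using that S by simp
  qed
  have f: "f \<in> borel_measurable M"
    unfolding f_def M_def by (auto simp: finite_imp_borel)
  have "density M f = discrete_measure S (\<lambda>x. (a x + b x) * (a x / (a x + b x)))"
    unfolding M_def f_def using S a b pos by (intro density_discrete_measure) (auto intro: add_nonneg_nonneg)
  also have "\<dots> = discrete_measure S a"
    using S pos by (intro discrete_measure_cong) (auto simp: less_imp_neq[symmetric])
  finally have dens: "density M f = discrete_measure S a" .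
  interpret finite_measure M
    unfolding M_def using S by (rule finite_measure_discrete_measure)
  have "AE y in M. f y = RN_deriv M (discrete_measure S a) y"
    by (rule RN_deriv_unique[OF f dens])
  then obtain N where N: "{y \<in> space M. f y \<noteq> RN_deriv M (discrete_measure S a) y} \<subseteq> N"
      "emeasure M N = 0" "N \<in> sets M"
    by (auto elim!: AE_E)
  have "f x = RN_deriv M (discrete_measure S a) x"
  proof (rule ccontr)
    assume "f x \<noteq> RN_deriv M (discrete_measure S a) x"
    then have "emeasure M {x} \<le> emeasure M N"
      using N by (intro emeasure_mono) (auto simp: M_def)
    moreover have "emeasure M {x} = ennreal (a x + b x)"
      using S x by (simp add: M_def emeasure_discrete_measure finite_imp_borel Int_absorb1)
    ultimately show False using N(2) pos[OF x] by simp
  qed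
  then show ?thesis
    using f_at[OF x] measure_add_discrete_measure[OF S a b] by (simp add: M_def)
qed

section \<open>Total variation and separated sets\<close>

lemma measure_diff_abs_le_1:
  assumes "borel_prob P" "borel_prob Q"
  shows "\<bar>measure P A - measure Q A\<bar> \<le> 1"
  using assms prob_space.prob_le_1[of P A] prob_space.prob_le_1[of Q A]
    measure_nonneg[of P A] measure_nonneg[of Q A]
  unfolding borel_prob_def by linarith

lemma tv_dist_le_1:
  assumes "borel_prob P" "borel_prob Q"
  shows "tv_dist P Q \<le> 1"
  unfolding tv_dist_def using measure_diff_abs_le_1[OF assms]
  by (intro cSUP_least) (auto intro!: exI[of _ "{}"])

lemma measure_diff_le_tv_dist:
  assumes "borel_prob P" "borel_prob Q" "A \<in> sets borel"
  shows "\<bar>measure P A - measure Q A\<bar> \<le> tv_dist P Q"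
  unfolding tv_dist_def using assms measure_diff_abs_le_1[OF assms(1,2)]
  by (intro cSUP_upper bdd_aboveI[where M=1]) auto

lemma tv_dist_discrete_measure_ge:
  assumes S: "finite S" and "\<And>x. x \<in> S \<Longrightarrow> a x \<ge> 0" "\<And>x. x \<in> S \<Longrightarrow> b x \<ge> 0"
    and "borel_prob (discrete_measure S a)" "borel_prob (discrete_measure S b)"
  shows "(\<Sum>x\<in>S. max 0 (a x - b x)) \<le> tv_dist (discrete_measure S a) (discrete_measure S b)"
proof -
  define A where "A = {x\<in>S. a x > b x}"
  have A: "A \<in> sets borel" unfolding A_def using S by (intro finite_imp_borel) auto
  have "measure (discrete_measure S a) A - measure (discrete_measure S b) A = (\<Sum>x\<in>S\<inter>A. a x - b x)"
    using assms A by (simp add: measure_discrete_measure sum_subtractf)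
  also have "\<dots> = (\<Sum>x\<in>S. max 0 (a x - b x))"
    using S by (intro sum.mono_neutral_cong_left) (auto simp: A_def max_def)
  finally show ?thesis using measure_diff_le_tv_dist[OF assms(4,5) A] by linarith
qed

lemma separated_subset_if_le_covering_number:
  fixes Y :: "'a::metric_space set"
  assumes "s > 0" "k \<le> covering_number s Y"
  obtains F where "F \<subseteq> Y" "finite F" "card F = k" "\<forall>x\<in>F. \<forall>y\<in>F. x \<noteq> y \<longrightarrow> s \<le> dist x y"
proof -
  have "\<exists>F. F \<subseteq> Y \<and> finite F \<and> card F = k \<and> (\<forall>x\<in>F. \<forall>y\<in>F. x \<noteq> y \<longrightarrow> s \<le> dist x y)"
    using assms(2)
  proof (induction k)
    case 0 then show ?case by (intro exI[of _ "{}"]) auto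
  next
    case (Suc k)
    then obtain F where F: "F \<subseteq> Y" "finite F" "card F = k" "\<forall>x\<in>F. \<forall>y\<in>F. x \<noteq> y \<longrightarrow> s \<le> dist x y"
      by auto
    have "\<not> Y \<subseteq> (\<Union>c\<in>F. ball c s)"
    proof
      assume "Y \<subseteq> (\<Union>c\<in>F. ball c s)"
      then have "covering_number s Y \<le> k"
        using F unfolding covering_number_def by (intro cInf_lower) auto
      then show False using Suc.prems by simp
    qed
    then obtain y where y: "y \<in> Y" "\<forall>c\<in>F. s \<le> dist c y" by (force simp: subset_eq not_less)
    then have "y \<notin> F" using assms(1) by force
    then show ?case
      using F y by (intro exI[of _ "insert y F"]) (auto simp: dist_commute)
  qed
  then show ?thesis using that by blast
qed

text \<open>No point is within \<open>D/2\<close> of two of three points at mutual distance \<open>\<ge> D\<close>.\<close>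
lemma far_from_some_pair:
  fixes F :: "'a::metric_space set"
  assumes fin: "finite F" and u: "D \<le> dist u0 u1" "D \<le> dist u0 u2" "D \<le> dist u1 u2"
  obtains y0 z0 G where "(y0, z0) \<in> {(u0, u1), (u0, u2), (u1, u2)}" "G \<subseteq> F" "card F \<le> 3 * card G"
    "\<forall>x\<in>G. D/2 \<le> dist x y0 \<and> D/2 \<le> dist x z0"
proof -
  define G where "G a b = {x\<in>F. D/2 \<le> dist x a \<and> D/2 \<le> dist x b}" for a b
  have near: False if "dist x a < D/2" "dist x b < D/2" "D \<le> dist a b" for x a b :: 'a
    using dist_triangle[of a b x] that by (simp add: dist_commute)
  have "F \<subseteq> G u0 u1 \<union> G u0 u2 \<union> G u1 u2"
  proof
    fix x assume x: "x \<in> F"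
    show "x \<in> G u0 u1 \<union> G u0 u2 \<union> G u1 u2"
    proof (rule ccontr)
      assume "x \<notin> G u0 u1 \<union> G u0 u2 \<union> G u1 u2"
      then have "(dist x u0 < D/2 \<or> dist x u1 < D/2) \<and> (dist x u0 < D/2 \<or> dist x u2 < D/2) \<and>
          (dist x u1 < D/2 \<or> dist x u2 < D/2)"
        using x by (auto simp: G_def not_le)
      then show False using near u by blast
    qed
  qed
  then have "card F \<le> card (G u0 u1 \<union> G u0 u2 \<union> G u1 u2)"
    by (rule card_mono[rotated]) (use fin in \<open>auto simp: G_def\<close>)
  also have "\<dots> \<le> card (G u0 u1) + card (G u0 u2) + card (G u1 u2)"
    by (meson card_Un_le add_right_mono le_trans)
  finally have card_F: "card F \<le> card (G u0 u1) + card (G u0 u2) + card (G u1 u2)" .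
  have G: "G a b \<subseteq> F" "\<forall>x\<in>G a b. D/2 \<le> dist x a \<and> D/2 \<le> dist x b" for a b
    by (auto simp: G_def)
  consider "card F \<le> 3 * card (G u0 u1)" | "card F \<le> 3 * card (G u0 u2)" | "card F \<le> 3 * card (G u1 u2)"
    using card_F by linarith
  then show ?thesis
  proof cases
    case 1 then show ?thesis using G by (intro that[of u0 u1 "G u0 u1"]) auto
  next
    case 2 then show ?thesis using G by (intro that[of u0 u2 "G u0 u2"]) auto
  next
    case 3 then show ?thesis using G by (intro that[of u1 u2 "G u1 u2"]) auto
  qed
qed

section \<open>Products of measures that agree off a small set\<close>

lemma emeasure_PiM_PiE_prob:
  assumes "finite I" "\<And>i. i \<in> I \<Longrightarrow> prob_space (M i)" "\<And>i. i \<in> I \<Longrightarrow> A i \<in> sets (M i)"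
  shows "emeasure (PiM I M) (PiE I A) = (\<Prod>i\<in>I. emeasure (M i) (A i))"
proof -
  have "prod_emb I M I (PiE I A) = PiE I A"
    using assms(3) by (intro prod_emb_PiE_same_index) (auto dest: sets.sets_into_space)
  then show ?thesis using emeasure_PiM_emb[of I M I A] assms by simp
qed

lemma measure_PiM_PiE_const_ge:
  fixes \<delta> :: real
  assumes I: "finite I" and P: "\<And>i. i \<in> I \<Longrightarrow> prob_space (M i)" and C: "\<And>i. i \<in> I \<Longrightarrow> C \<in> sets (M i)"
    and mC: "\<And>i. i \<in> I \<Longrightarrow> 1 - \<delta> \<le> measure (M i) C" and \<delta>: "0 \<le> \<delta>" "\<delta> \<le> 1"
  shows "1 - card I * \<delta> \<le> measure (PiM I M) (PiE I (\<lambda>_. C))"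
proof -
  have "emeasure (PiM I M) (PiE I (\<lambda>_. C)) = (\<Prod>i\<in>I. emeasure (M i) C)"
    using I P C by (rule emeasure_PiM_PiE_prob)
  also have "\<dots> = (\<Prod>i\<in>I. ennreal (measure (M i) C))"
    using P by (intro prod.cong refl) (auto simp: prob_space_def finite_measure.emeasure_eq_measure)
  also have "\<dots> = ennreal (\<Prod>i\<in>I. measure (M i) C)"
    by (rule prod_ennreal) simp
  finally have "measure (PiM I M) (PiE I (\<lambda>_. C)) = (\<Prod>i\<in>I. measure (M i) C)"
    by (simp add: measure_def prod_nonneg)
  moreover have "(1 - \<delta>) ^ card I \<le> (\<Prod>i\<in>I. measure (M i) C)"
  proof -
    have "(\<Prod>i\<in>I. 1 - \<delta>) \<le> (\<Prod>i\<in>I. measure (M i) C)"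
      using mC \<delta> by (intro prod_mono) auto
    then show ?thesis by simp
  qed
  moreover have "1 - card I * \<delta> \<le> (1 - \<delta>) ^ card I"
    using Bernoulli_inequality[of "-\<delta>" "card I"] \<delta> by simp
  ultimately show ?thesis by linarith
qed

lemma emeasure_PiM_Int_PiE_eq:
  assumes I: "finite I"
    and P: "\<And>i. i \<in> I \<Longrightarrow> prob_space (M i)" and P': "\<And>i. i \<in> I \<Longrightarrow> prob_space (M' i)"
    and sM: "\<And>i. sets (M i) = sets N" and sM': "\<And>i. sets (M' i) = sets N" and C: "C \<in> sets N"
    and eqC: "\<And>i A. i \<in> I \<Longrightarrow> A \<in> sets N \<Longrightarrow> emeasure (M i) (A \<inter> C) = emeasure (M' i) (A \<inter> C)"
    and E: "E \<in> sets (PiM I (\<lambda>_. N))"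
  shows "emeasure (PiM I M) (PiE I (\<lambda>_. C) \<inter> E) = emeasure (PiM I M') (PiE I (\<lambda>_. C) \<inter> E)"
proof -
  define B where "B = PiE I (\<lambda>_. C)"
  have sP: "sets (PiM I M) = sets (PiM I (\<lambda>_. N))" "sets (PiM I M') = sets (PiM I (\<lambda>_. N))"
    using sM sM' by (auto intro!: sets_PiM_cong)
  have B: "B \<in> sets (PiM I (\<lambda>_. N))"
    unfolding B_def using I C by (intro sets_PiM_I_finite) auto
  have gen: "emeasure (PiM I M) (B \<inter> PiE I A) = emeasure (PiM I M') (B \<inter> PiE I A)"
    if A: "\<And>i. i \<in> I \<Longrightarrow> A i \<in> sets N" for A
  proof -
    have BA: "B \<inter> PiE I A = PiE I (\<lambda>i. A i \<inter> C)" unfolding B_def by (auto simp: PiE_iff)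
    have "emeasure (PiM I M) (PiE I (\<lambda>i. A i \<inter> C)) = (\<Prod>i\<in>I. emeasure (M i) (A i \<inter> C))"
      using I P A C sM by (intro emeasure_PiM_PiE_prob) auto
    also have "\<dots> = (\<Prod>i\<in>I. emeasure (M' i) (A i \<inter> C))"
      using eqC A by (intro prod.cong) auto
    also have "\<dots> = emeasure (PiM I M') (PiE I (\<lambda>i. A i \<inter> C))"
      using I P' A C sM' by (intro emeasure_PiM_PiE_prob[symmetric]) auto
    finally show ?thesis unfolding BA .
  qed
  have "density (PiM I M) (indicator B) = density (PiM I M') (indicator B)"
  proof (rule measure_eqI_PiM_finite[where M="\<lambda>_. N" and A="\<lambda>_. PiE I (\<lambda>_. space N)"])
    show "finite I" by fact
    show "sets (density (PiM I M) (indicator B)) = sets (PiM I (\<lambda>_. N))"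
      "sets (density (PiM I M') (indicator B)) = sets (PiM I (\<lambda>_. N))"
      using sP by simp_all
    fix A assume A: "\<And>i. i \<in> I \<Longrightarrow> A i \<in> sets N"
    have "PiE I A \<in> sets (PiM I (\<lambda>_. N))" using I A by (intro sets_PiM_I_finite) auto
    then show "emeasure (density (PiM I M) (indicator B)) (PiE I A) =
        emeasure (density (PiM I M') (indicator B)) (PiE I A)"
      using gen[OF A] B sP by (simp add: emeasure_restricted)
  next
    show "range (\<lambda>_::nat. PiE I (\<lambda>_. space N)) \<subseteq> prod_algebra I (\<lambda>_. N)"
      using space_in_prod_algebra[of I "\<lambda>_. N"] by (auto simp: space_PiM)
    show "(\<Union>i::nat. PiE I (\<lambda>_. space N)) = space (PiM I (\<lambda>_. N))" by (simp add: space_PiM)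
    interpret prob_space "PiM I M" using P by (rule prob_space_PiM)
    have "PiE I (\<lambda>_. space N) \<in> sets (PiM I M)"
      using sP sets.top[of "PiM I (\<lambda>_. N)"] by (simp add: space_PiM)
    then show "emeasure (density (PiM I M) (indicator B)) (PiE I (\<lambda>_. space N)) \<noteq> \<infinity>" for i :: nat
      using B sP by (simp add: emeasure_restricted)
  qed
  then have "emeasure (PiM I M) (B \<inter> E) = emeasure (PiM I M') (B \<inter> E)"
    using B E sP by (metis emeasure_restricted)
  then show ?thesis unfolding B_def .
qed

lemma measure_PiM_diff_le:
  fixes \<delta> :: real
  assumes I: "finite I"
    and P: "\<And>i. i \<in> I \<Longrightarrow> prob_space (M i)" and P': "\<And>i. i \<in> I \<Longrightarrow> prob_space (M' i)"
    and sM: "\<And>i. sets (M i) = sets N" and sM': "\<And>i. sets (M' i) = sets N" and C: "C \<in> sets N"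
    and eqC: "\<And>i A. i \<in> I \<Longrightarrow> A \<in> sets N \<Longrightarrow> emeasure (M i) (A \<inter> C) = emeasure (M' i) (A \<inter> C)"
    and mC: "\<And>i. i \<in> I \<Longrightarrow> 1 - \<delta> \<le> measure (M i) C" and mC': "\<And>i. i \<in> I \<Longrightarrow> 1 - \<delta> \<le> measure (M' i) C"
    and \<delta>: "0 \<le> \<delta>" "\<delta> \<le> 1" and E: "E \<in> sets (PiM I (\<lambda>_. N))"
  shows "\<bar>measure (PiM I M) E - measure (PiM I M') E\<bar> \<le> card I * \<delta>"
proof -
  define B where "B = PiE I (\<lambda>_. C)"
  interpret P: prob_space "PiM I M" using P by (rule prob_space_PiM)
  interpret P': prob_space "PiM I M'" using P' by (rule prob_space_PiM)
  have sP: "sets (PiM I M) = sets (PiM I (\<lambda>_. N))" "sets (PiM I M') = sets (PiM I (\<lambda>_. N))"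
    using sM sM' by (auto intro!: sets_PiM_cong)
  have B: "B \<in> sets (PiM I (\<lambda>_. N))"
    unfolding B_def using I C by (intro sets_PiM_I_finite) auto
  have BE: "measure (PiM I M) (B \<inter> E) = measure (PiM I M') (B \<inter> E)"
    using emeasure_PiM_Int_PiE_eq[OF assms(1-7) E] unfolding B_def measure_def by (simp only:)
  have "measure (PiM I M) (E - B) \<le> card I * \<delta>" "measure (PiM I M') (E - B) \<le> card I * \<delta>"
  proof -
    have "measure (PiM I M) (E - B) \<le> measure (PiM I M) (space (PiM I M) - B)"
      using E B sP by (intro P.finite_measure_mono) (auto dest: sets.sets_into_space)
    also have "\<dots> = 1 - measure (PiM I M) B" using B sP by (simp add: P.prob_compl)
    finally have "measure (PiM I M) (E - B) \<le> 1 - measure (PiM I M) B" .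
    moreover have "1 - card I * \<delta> \<le> measure (PiM I M) B"
      unfolding B_def using I P mC \<delta> C sM by (intro measure_PiM_PiE_const_ge) auto
    ultimately show "measure (PiM I M) (E - B) \<le> card I * \<delta>" by linarith
    have "measure (PiM I M') (E - B) \<le> measure (PiM I M') (space (PiM I M') - B)"
      using E B sP by (intro P'.finite_measure_mono) (auto dest: sets.sets_into_space)
    also have "\<dots> = 1 - measure (PiM I M') B" using B sP by (simp add: P'.prob_compl)
    finally have "measure (PiM I M') (E - B) \<le> 1 - measure (PiM I M') B" .
    moreover have "1 - card I * \<delta> \<le> measure (PiM I M') B"
      unfolding B_def using I P' mC' \<delta> C sM' by (intro measure_PiM_PiE_const_ge) auto
    ultimately show "measure (PiM I M') (E - B) \<le> card I * \<delta>" by linarith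
  qed
  moreover have "measure (PiM I M) E = measure (PiM I M) (B \<inter> E) + measure (PiM I M) (E - B)"
    "measure (PiM I M') E = measure (PiM I M') (B \<inter> E) + measure (PiM I M') (E - B)"
    using E B sP by (simp_all add: P.finite_measure_Diff' P'.finite_measure_Diff' Int_commute)
  ultimately show ?thesis using BE measure_nonneg[of "PiM I M" "E - B"] measure_nonneg[of "PiM I M'" "E - B"]
    by linarith
qed

section \<open>Classification risk\<close>

definition label_weight :: "real \<Rightarrow> nat \<Rightarrow> (nat \<Rightarrow> bool) \<Rightarrow> real" where
  "label_weight w n ws = w ^ card {j\<in>{..<n}. ws j} * (1 - w) ^ card {j\<in>{..<n}. \<not> ws j}"

definition sample_measure :: "nat \<Rightarrow> 'a measure \<Rightarrow> 'a measure \<Rightarrow> (nat \<Rightarrow> bool) \<Rightarrow> (nat \<Rightarrow> 'a) measure" where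
  "sample_measure n PX PY ws = PiM {..<n} (\<lambda>j. if ws j then PY else PX)"

definition prob_predicts ::
  "nat \<Rightarrow> 'a measure \<Rightarrow> 'a measure \<Rightarrow> ((nat \<Rightarrow> 'a) \<Rightarrow> (nat \<Rightarrow> bool) \<Rightarrow> 'a \<Rightarrow> bool) \<Rightarrow>
   (nat \<Rightarrow> bool) \<Rightarrow> 'a \<Rightarrow> real" where
  "prob_predicts n PX PY \<phi> ws x =
     measure (sample_measure n PX PY ws) {zs \<in> space (sample_measure n PX PY ws). \<phi> zs ws x}"

definition classification_excess ::
  "nat \<Rightarrow> real \<Rightarrow> ((nat \<Rightarrow> 'a::topological_space) \<Rightarrow> (nat \<Rightarrow> bool) \<Rightarrow> 'a \<Rightarrow> bool) \<Rightarrow>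
   'a measure \<Rightarrow> 'a measure \<Rightarrow> real" where
  "classification_excess n w \<phi> PX PY =
     prob_output n w PX PY PX \<phi> True + prob_output n w PX PY PY \<phi> False - 1 + tv_dist PX PY"

lemma label_weight_nonneg: "0 \<le> w \<Longrightarrow> w \<le> 1 \<Longrightarrow> 0 \<le> label_weight w n ws"
  by (simp add: label_weight_def)

lemma sum_label_weight: "(\<Sum>ws\<in>PiE {..<n} (\<lambda>_. UNIV). label_weight w n ws) = 1"
proof -
  have prod_eq: "label_weight w n ws = (\<Prod>j\<in>{..<n}. if ws j then w else 1 - w)" for ws
  proof -
    have "{..<n} \<inter> Collect ws = {j\<in>{..<n}. ws j}" "{..<n} \<inter> - Collect ws = {j\<in>{..<n}. \<not> ws j}"
      by auto
    then show ?thesis unfolding label_weight_def by (subst prod.If_cases) simp_all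
  qed
  have "(\<Sum>ws\<in>PiE {..<n} (\<lambda>_. UNIV). label_weight w n ws) =
      (\<Sum>ws\<in>PiE {..<n} (\<lambda>_. UNIV). \<Prod>j\<in>{..<n}. if ws j then w else 1 - w)"
    by (simp only: prod_eq)
  also have "\<dots> = (\<Prod>j\<in>{..<n}. \<Sum>b\<in>UNIV. if b then w else 1 - w)"
    by (rule prod_sum_PiE[symmetric]) auto
  also have "\<dots> = 1"
    by (simp add: UNIV_bool)
  finally show ?thesis .
qed

lemma prob_space_sample_measure:
  "borel_prob PX \<Longrightarrow> borel_prob PY \<Longrightarrow> prob_space (sample_measure n PX PY ws)"
  unfolding sample_measure_def borel_prob_def by (intro prob_space_PiM) auto

lemma sets_sample_measure:
  "borel_prob PX \<Longrightarrow> borel_prob PY \<Longrightarrow> sets (sample_measure n PX PY ws) = sets (PiM {..<n} (\<lambda>_. borel))"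
  unfolding sample_measure_def borel_prob_def by (intro sets_PiM_cong) auto

lemma classifier_measurable_pair:
  assumes "is_classifier n \<phi>" "ws \<in> PiE {..<n} (\<lambda>_. UNIV)"
    and "sets M = sets (PiM {..<n} (\<lambda>_. borel))" "sets N = sets borel"
  shows "(\<lambda>(zs, z). \<phi> zs ws z) \<in> measurable (M \<Otimes>\<^sub>M N) (count_space UNIV)"
proof -
  have "fst \<in> measurable (M \<Otimes>\<^sub>M N) (PiM {..<n} (\<lambda>_. borel))"
    using measurable_fst[of M N] assms(3) by (simp cong: measurable_cong_sets)
  moreover have "snd \<in> measurable (M \<Otimes>\<^sub>M N) borel"
    using measurable_snd[of M N] assms(4) by (simp cong: measurable_cong_sets)
  moreover have "(\<lambda>p. ws) \<in> measurable (M \<Otimes>\<^sub>M N) (PiM {..<n} (\<lambda>_. count_space UNIV))"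
    using assms(2) by (simp add: space_PiM)
  ultimately have "(\<lambda>p. ((fst p, ws), snd p)) \<in> measurable (M \<Otimes>\<^sub>M N) (classifier_space n)"
    unfolding classifier_space_def by (intro measurable_Pair)
  from measurable_comp[OF this assms(1)[unfolded is_classifier_def]] show ?thesis
    by (simp add: comp_def case_prod_beta')
qed

lemma classifier_section_sets:
  assumes "is_classifier n \<phi>" "ws \<in> PiE {..<n} (\<lambda>_. UNIV)"
    and "sets M = sets (PiM {..<n} (\<lambda>_. borel))"
  shows "{zs \<in> space M. \<phi> zs ws x = v} \<in> sets M"
proof -
  have "(\<lambda>zs. \<phi> zs ws x) \<in> measurable M (count_space UNIV)"
    using measurable_Pair1[OF classifier_measurable_pair[OF assms refl], of x] by simp
  from measurable_sets[OF this, of "{v}"] show ?thesis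
    by (simp add: vimage_def Int_def conj_commute)
qed

lemma prob_predicts_nonneg: "0 \<le> prob_predicts n PX PY \<phi> ws x"
  unfolding prob_predicts_def by (rule measure_nonneg)

lemma prob_predicts_le_1:
  "borel_prob PX \<Longrightarrow> borel_prob PY \<Longrightarrow> prob_predicts n PX PY \<phi> ws x \<le> 1"
  unfolding prob_predicts_def by (rule prob_space.prob_le_1[OF prob_space_sample_measure])

lemma prob_not_predicts:
  assumes "is_classifier n \<phi>" "ws \<in> PiE {..<n} (\<lambda>_. UNIV)" "borel_prob PX" "borel_prob PY"
  shows "measure (sample_measure n PX PY ws) {zs \<in> space (sample_measure n PX PY ws). \<phi> zs ws x = False} =
    1 - prob_predicts n PX PY \<phi> ws x"
proof -
  let ?M = "sample_measure n PX PY ws"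
  let ?T = "{zs \<in> space ?M. \<phi> zs ws x}"
  interpret prob_space ?M using assms(3,4) by (rule prob_space_sample_measure)
  have "{zs \<in> space ?M. \<phi> zs ws x = True} \<in> events"
    using classifier_section_sets[OF assms(1,2) sets_sample_measure[OF assms(3,4)]] .
  then have T: "?T \<in> events" by simp
  have "{zs \<in> space ?M. \<phi> zs ws x = False} = space ?M - ?T"
    by auto
  then have "prob {zs \<in> space ?M. \<phi> zs ws x = False} = 1 - prob ?T"
    using prob_compl[OF T] by (simp only:)
  then show ?thesis unfolding prob_predicts_def .
qed

lemma prob_output_nonneg_le_1:
  assumes "borel_prob PX" "borel_prob PY" "borel_prob PZ" "0 \<le> w" "w \<le> 1"
  shows "0 \<le> prob_output n w PX PY PZ \<phi> v" "prob_output n w PX PY PZ \<phi> v \<le> 1"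
proof -
  let ?M = "\<lambda>ws. sample_measure n PX PY ws \<Otimes>\<^sub>M PZ"
  let ?m = "\<lambda>ws. measure (?M ws) {(zs, z) \<in> space (?M ws). \<phi> zs ws z = v}"
  have "prob_space (?M ws)" for ws
    using assms by (intro prob_space_pair prob_space_sample_measure) (auto simp: borel_prob_def)
  then have m: "?m ws \<le> 1" for ws using prob_space.prob_le_1 by blast
  have eq: "prob_output n w PX PY PZ \<phi> v = (\<Sum>ws\<in>PiE {..<n} (\<lambda>_. UNIV). label_weight w n ws * ?m ws)"
    unfolding prob_output_def label_weight_def sample_measure_def by (rule refl)
  have w: "0 \<le> label_weight w n ws" for ws
    using assms(4,5) by (rule label_weight_nonneg)
  show "0 \<le> prob_output n w PX PY PZ \<phi> v"
    unfolding eq by (intro sum_nonneg mult_nonneg_nonneg w measure_nonneg)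
  have "(\<Sum>ws\<in>PiE {..<n} (\<lambda>_. UNIV). label_weight w n ws * ?m ws) \<le>
      (\<Sum>ws\<in>PiE {..<n} (\<lambda>_. UNIV). label_weight w n ws)"
    by (intro sum_mono mult_right_le_one_le w m measure_nonneg)
  then show "prob_output n w PX PY PZ \<phi> v \<le> 1"
    unfolding eq sum_label_weight .
qed

lemma prob_output_discrete_measure:
  assumes cl: "is_classifier n \<phi>" and PX: "borel_prob PX" and PY: "borel_prob PY"
    and S: "finite S" and c: "\<And>x. x \<in> S \<Longrightarrow> c x \<ge> 0"
  shows "prob_output n w PX PY (discrete_measure S c) \<phi> v =
     (\<Sum>ws\<in>PiE {..<n} (\<lambda>_. UNIV). label_weight w n ws *
        (\<Sum>x\<in>S. c x * measure (sample_measure n PX PY ws) {zs \<in> space (sample_measure n PX PY ws). \<phi> zs ws x = v}))"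
  unfolding prob_output_def label_weight_def sample_measure_def[symmetric]
proof (intro sum.cong refl arg_cong2[where f="(*)"])
  fix ws assume ws: "ws \<in> PiE {..<n} (\<lambda>_. UNIV :: bool set)"
  define M where "M = sample_measure n PX PY ws"
  define E where "E = {(zs, z) \<in> space (M \<Otimes>\<^sub>M discrete_measure S c). \<phi> zs ws z = v}"
  interpret M: prob_space M unfolding M_def using PX PY by (rule prob_space_sample_measure)
  interpret D: finite_measure "discrete_measure S c" using S by (rule finite_measure_discrete_measure)
  interpret pair_sigma_finite M "discrete_measure S c" by unfold_locales
  have sets_M: "sets M = sets (PiM {..<n} (\<lambda>_. borel))"
    unfolding M_def using PX PY by (rule sets_sample_measure)
  have E: "E \<in> sets (M \<Otimes>\<^sub>M discrete_measure S c)"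
    using measurable_sets[OF classifier_measurable_pair[OF cl ws sets_M sets_discrete_measure], of "{v}"]
    by (simp add: E_def vimage_def Int_def conj_commute case_prod_beta')
  have slice: "(\<lambda>x. (x, y)) -` E = {zs \<in> space M. \<phi> zs ws y = v}" for y
    unfolding E_def space_pair_measure space_discrete_measure by blast
  have "emeasure (M \<Otimes>\<^sub>M discrete_measure S c) E =
      (\<integral>\<^sup>+y. emeasure M ((\<lambda>x. (x, y)) -` E) \<partial>discrete_measure S c)"
    using E by (rule emeasure_pair_measure_alt2)
  also have "\<dots> = (\<Sum>y\<in>S. ennreal (c y) * emeasure M {zs \<in> space M. \<phi> zs ws y = v})"
    using S by (simp add: nn_integral_discrete_measure slice)
  also have "\<dots> = ennreal (\<Sum>y\<in>S. c y * measure M {zs \<in> space M. \<phi> zs ws y = v})"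
    using c by (simp add: M.emeasure_eq_measure ennreal_mult'' sum_ennreal[symmetric] measure_nonneg)
  finally show "measure (M \<Otimes>\<^sub>M discrete_measure S c) E =
      (\<Sum>y\<in>S. c y * measure M {zs \<in> space M. \<phi> zs ws y = v})"
    using c by (simp add: measure_def sum_nonneg measure_nonneg)
qed

lemma classification_excess_discrete_ge:
  assumes cl: "is_classifier n \<phi>" and w: "0 \<le> w" "w \<le> 1" and S: "finite S"
    and a: "\<And>x. x \<in> S \<Longrightarrow> 0 \<le> a x" "(\<Sum>x\<in>S. a x) = 1"
    and b: "\<And>x. x \<in> S \<Longrightarrow> 0 \<le> b x" "(\<Sum>x\<in>S. b x) = 1"
  defines "q \<equiv> prob_predicts n (discrete_measure S a) (discrete_measure S b) \<phi>"
  shows "(\<Sum>ws\<in>PiE {..<n} (\<lambda>_. UNIV). label_weight w n ws *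
      (\<Sum>x\<in>S. max 0 (a x - b x) * q ws x + max 0 (b x - a x) * (1 - q ws x)))
    \<le> classification_excess n w \<phi> (discrete_measure S a) (discrete_measure S b)"
proof -
  let ?PX = "discrete_measure S a" and ?PY = "discrete_measure S b" and ?WS = "PiE {..<n} (\<lambda>_. UNIV)"
  have PX: "borel_prob ?PX" and PY: "borel_prob ?PY"
    using S a b by (auto intro: borel_prob_discrete_measure)
  have "prob_output n w ?PX ?PY ?PX \<phi> True = (\<Sum>ws\<in>?WS. label_weight w n ws * (\<Sum>x\<in>S. a x * q ws x))"
    using prob_output_discrete_measure[OF cl PX PY S a(1)] by (simp add: q_def prob_predicts_def)
  moreover have "prob_output n w ?PX ?PY ?PY \<phi> False =
      (\<Sum>ws\<in>?WS. label_weight w n ws * (\<Sum>x\<in>S. b x * (1 - q ws x)))"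
    using prob_output_discrete_measure[OF cl PX PY S b(1)] prob_not_predicts[OF cl _ PX PY]
    by (simp add: q_def)
  moreover have "(\<Sum>x\<in>S. max 0 (a x - b x)) \<le> tv_dist ?PX ?PY"
    using S a(1) b(1) PX PY by (rule tv_dist_discrete_measure_ge)
  moreover have "(\<Sum>ws\<in>?WS. label_weight w n ws *
      (\<Sum>x\<in>S. max 0 (a x - b x) * q ws x + max 0 (b x - a x) * (1 - q ws x))) =
    (\<Sum>ws\<in>?WS. label_weight w n ws * (\<Sum>x\<in>S. a x * q ws x)) +
    (\<Sum>ws\<in>?WS. label_weight w n ws * (\<Sum>x\<in>S. b x * (1 - q ws x))) +
    ((\<Sum>x\<in>S. max 0 (a x - b x)) - 1)"
  proof -
    have "max 0 (a x - b x) * q ws x + max 0 (b x - a x) * (1 - q ws x) =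
        a x * q ws x + b x * (1 - q ws x) + (max 0 (a x - b x) - a x)" for x ws
      by (cases "b x \<le> a x") (simp_all add: max_def algebra_simps)
    then have "(\<Sum>x\<in>S. max 0 (a x - b x) * q ws x + max 0 (b x - a x) * (1 - q ws x)) =
        (\<Sum>x\<in>S. a x * q ws x) + (\<Sum>x\<in>S. b x * (1 - q ws x)) + ((\<Sum>x\<in>S. max 0 (a x - b x)) - 1)" for ws
      by (simp only: sum.distrib sum_subtractf a(2))
    then show ?thesis
      by (simp only: distrib_left sum.distrib sum_distrib_right[symmetric] sum_label_weight mult_1)
  qed
  ultimately show ?thesis
    unfolding classification_excess_def by linarith
qed

lemma classification_excess_le_2:
  assumes "borel_prob PX" "borel_prob PY" "0 \<le> w" "w \<le> 1"
  shows "classification_excess n w \<phi> PX PY \<le> 2"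
  using prob_output_nonneg_le_1[OF assms(1,2,1,3,4), of n \<phi> True]
    prob_output_nonneg_le_1[OF assms(1,2,2,3,4), of n \<phi> False] tv_dist_le_1[OF assms(1,2)]
  unfolding classification_excess_def by linarith

lemma classification_excess_le_excess_risk:
  assumes "(PX, PY) \<in> model_class Y C \<beta> \<kappa>" "0 \<le> w" "w \<le> 1"
  shows "classification_excess n w \<phi> PX PY \<le> excess_risk Y C \<beta> \<kappa> n w \<phi>"
proof -
  have "bdd_above ((\<lambda>(PX, PY). classification_excess n w \<phi> PX PY) ` model_class Y C \<beta> \<kappa>)"
    using assms(2,3) classification_excess_le_2
    by (intro bdd_aboveI[where M=2]) (auto simp: model_class_def)
  from cSUP_upper[OF assms(1) this] show ?thesis
    unfolding excess_risk_def classification_excess_def[symmetric] by (simp only: prod.case)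
qed

section \<open>A hypercube of hypotheses\<close>

lemma sum_alternating_sign:
  fixes \<sigma> :: "nat \<Rightarrow> bool"
  shows "(\<Sum>i<2*k. (if even i = \<sigma> (i div 2) then 1 else -1 :: real)) = 0"
proof (induction k)
  case (Suc k)
  have "{..<2 * Suc k} = insert (2*k+1) (insert (2*k) {..<2*k})" by auto
  then show ?case using Suc by simp
qed simp

text \<open>The two anchors \<open>y0\<close>, \<open>z0\<close> carry
  mass \<open>1/2\<close> and make \<open>PX\<close> and \<open>PY\<close> at total variation \<open>\<ge> H\<close>; the \<open>2K\<close> cells \<open>c i\<close> carry mass
  \<open>\<mu> = 1/(4K)\<close> each, and on the pair \<open>c (2k), c (2k+1)\<close> the regression function is \<open>1/2 \<plusminus> h\<close>
  with the sign chosen by \<open>\<sigma> k\<close>.\<close>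
locale hypercube_family =
  fixes y0 z0 :: "'a::metric_space" and c :: "nat \<Rightarrow> 'a" and K :: nat and H h :: real
  assumes K: "0 < K" and c_inj: "inj_on c {..<2*K}" and y0_ne_z0: "y0 \<noteq> z0"
    and y0_notin: "y0 \<notin> c ` {..<2*K}" and z0_notin: "z0 \<notin> c ` {..<2*K}"
    and hH: "0 < h" "h \<le> H" "H \<le> 1/4"
begin

definition "support = {y0, z0} \<union> c ` {..<2*K}"

definition "\<mu> = 1 / (4 * real K)"

definition sign :: "(nat \<Rightarrow> bool) \<Rightarrow> nat \<Rightarrow> real" where
  "sign \<sigma> i = (if even i = \<sigma> (i div 2) then 1 else -1)"

definition mass :: "real \<Rightarrow> (nat \<Rightarrow> bool) \<Rightarrow> 'a \<Rightarrow> real" where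
  "mass e \<sigma> x = (if x = y0 then (1/2 + e*H)/2 else if x = z0 then (1/2 - e*H)/2
     else if x \<in> c ` {..<2*K} then \<mu> * (1 + e*2*h * sign \<sigma> (inv_into {..<2*K} c x)) else 0)"

definition "flip k \<sigma> = \<sigma>(k := \<not> \<sigma> k)"

abbreviation "PX \<sigma> \<equiv> discrete_measure support (mass 1 \<sigma>)"
abbreviation "PY \<sigma> \<equiv> discrete_measure support (mass (-1) \<sigma>)"
abbreviation "hypercube \<equiv> PiE {..<K} (\<lambda>_. UNIV :: bool set)"

lemma finite_support: "finite support"
  by (simp add: support_def)

lemma \<mu>_pos: "\<mu> > 0"
  using K by (simp add: \<mu>_def)

lemma mass_y0: "mass e \<sigma> y0 = (1/2 + e*H)/2"
  by (simp add: mass_def)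

lemma mass_z0: "mass e \<sigma> z0 = (1/2 - e*H)/2"
  using y0_ne_z0 by (simp add: mass_def)

lemma mass_c: "i < 2*K \<Longrightarrow> mass e \<sigma> (c i) = \<mu> * (1 + e*2*h * sign \<sigma> i)"
  using y0_notin z0_notin c_inj by (auto simp: mass_def inv_into_f_f)

lemma abs_sign: "\<bar>sign \<sigma> i\<bar> = 1"
  by (simp add: sign_def)

lemma sign_pair: "sign \<sigma> (2*k) = (if \<sigma> k then 1 else -1)" "sign \<sigma> (2*k+1) = (if \<sigma> k then -1 else 1)"
  by (auto simp: sign_def)

lemma mass_pos:
  assumes "e = 1 \<or> e = -1" "x \<in> support"
  shows "mass e \<sigma> x > 0"
proof -
  have small: "\<bar>e*2*h * sign \<sigma> i\<bar> \<le> 1/2" for i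
    using assms(1) hH abs_sign[of \<sigma> i] by (auto simp: abs_mult)
  have "1 + e*2*h * sign \<sigma> i > 0" for i
    using small[of i] unfolding abs_le_iff by linarith
  then show ?thesis
    using assms hH \<mu>_pos by (auto simp: support_def mass_y0 mass_z0 mass_c)
qed

lemma mass_nonneg: "e = 1 \<or> e = -1 \<Longrightarrow> x \<in> support \<Longrightarrow> 0 \<le> mass e \<sigma> x"
  using mass_pos less_imp_le by blast

lemma sum_mass_cells: "(\<Sum>x\<in>c ` {..<2*K}. mass e \<sigma> x) = 1/2"
proof -
  have "(\<Sum>x\<in>c ` {..<2*K}. mass e \<sigma> x) = (\<Sum>i<2*K. \<mu> * (1 + e*2*h * sign \<sigma> i))"
    using c_inj by (simp add: sum.reindex mass_c)
  also have "\<dots> = (\<Sum>i<2*K. \<mu>) + \<mu>*e*2*h * (\<Sum>i<2*K. sign \<sigma> i)"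
    by (simp add: sum.distrib sum_distrib_left algebra_simps)
  also have "(\<Sum>i<2*K. sign \<sigma> i) = 0"
    unfolding sign_def by (rule sum_alternating_sign)
  finally show ?thesis
    using K by (simp add: \<mu>_def)
qed

lemma sum_mass: "(\<Sum>x\<in>support. mass e \<sigma> x) = 1"
proof -
  have "(\<Sum>x\<in>support. mass e \<sigma> x) = mass e \<sigma> y0 + (mass e \<sigma> z0 + (\<Sum>x\<in>c ` {..<2*K}. mass e \<sigma> x))"
    unfolding support_def using y0_ne_z0 y0_notin z0_notin by (simp add: sum.insert)
  then show ?thesis
    unfolding sum_mass_cells mass_y0 mass_z0 by (simp add: field_simps)
qed

lemma borel_prob_PX: "borel_prob (PX \<sigma>)" and borel_prob_PY: "borel_prob (PY \<sigma>)"
  using mass_nonneg by (auto intro!: borel_prob_discrete_measure finite_support sum_mass)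

lemma mass_flip:
  assumes "k < K" "x \<noteq> c (2*k)" "x \<noteq> c (2*k+1)"
  shows "mass e (flip k \<sigma>) x = mass e \<sigma> x"
proof (cases "x \<in> c ` {..<2*K}")
  case True
  then obtain i where i: "i < 2*K" "x = c i" by auto
  with assms have "i \<noteq> 2*k" "i \<noteq> 2*k+1" by auto
  then have "i div 2 \<noteq> k" by auto
  then have "sign (flip k \<sigma>) i = sign \<sigma> i" by (simp add: sign_def flip_def)
  then show ?thesis using i by (simp add: mass_c)
qed (auto simp: mass_def)

lemma measure_off_pair:
  assumes "k < K" "e = 1 \<or> e = -1"
  shows "1 - 2*\<mu> \<le> measure (discrete_measure support (mass e \<sigma>)) (UNIV - {c (2*k), c (2*k+1)})"
proof -
  have k2: "2*k < 2*K" "2*k+1 < 2*K" using assms by auto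
  then have "c (2*k) \<noteq> c (2*k+1)" using inj_onD[OF c_inj, of "2*k" "2*k+1"] by auto
  then have "(\<Sum>x\<in>{c (2*k), c (2*k+1)}. mass e \<sigma> x) = 2*\<mu> + 2*\<mu>*e*h * (sign \<sigma> (2*k) + sign \<sigma> (2*k+1))"
    using mass_c[OF k2(1)] mass_c[OF k2(2)] by (simp add: algebra_simps)
  moreover have "sign \<sigma> (2*k) + sign \<sigma> (2*k+1) = 0"
    unfolding sign_def by auto
  ultimately have pair: "(\<Sum>x\<in>{c (2*k), c (2*k+1)}. mass e \<sigma> x) = 2*\<mu>"
    by simp
  have sub: "{c (2*k), c (2*k+1)} \<subseteq> support" using k2 by (auto simp: support_def)
  have "measure (discrete_measure support (mass e \<sigma>)) (UNIV - {c (2*k), c (2*k+1)}) =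
      (\<Sum>x\<in>support - {c (2*k), c (2*k+1)}. mass e \<sigma> x)"
    using mass_nonneg[OF assms(2)]
    by (subst measure_discrete_measure) (auto simp: finite_support Diff_eq intro: borel_open)
  also have "\<dots> = (\<Sum>x\<in>support. mass e \<sigma> x) - (\<Sum>x\<in>{c (2*k), c (2*k+1)}. mass e \<sigma> x)"
    using finite_support sub by (rule sum_diff)
  also have "\<dots> = 1 - 2*\<mu>"
    by (simp only: pair sum_mass)
  finally show ?thesis by simp
qed


lemma regret_at_cell:
  assumes "k < K"
  shows "max 0 (mass 1 \<sigma> (c (2*k)) - mass (-1) \<sigma> (c (2*k))) * q +
      max 0 (mass (-1) \<sigma> (c (2*k)) - mass 1 \<sigma> (c (2*k))) * (1 - q) =
    4*\<mu>*h * (if \<sigma> k then q else 1 - q)"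
proof -
  have "2*k < 2*K" using assms by simp
  then have "mass 1 \<sigma> (c (2*k)) - mass (-1) \<sigma> (c (2*k)) = 4*\<mu>*h * sign \<sigma> (2*k)"
    by (simp add: mass_c algebra_simps)
  then have diff: "mass 1 \<sigma> (c (2*k)) - mass (-1) \<sigma> (c (2*k)) = (if \<sigma> k then 4*\<mu>*h else - (4*\<mu>*h))"
    unfolding sign_pair by simp
  have "0 < \<mu> * h" using \<mu>_pos hH by simp
  show ?thesis
  proof (cases "\<sigma> k")
    case True
    with diff \<open>0 < \<mu> * h\<close> have "max 0 (mass 1 \<sigma> (c (2*k)) - mass (-1) \<sigma> (c (2*k))) = 4*\<mu>*h"
      "max 0 (mass (-1) \<sigma> (c (2*k)) - mass 1 \<sigma> (c (2*k))) = 0" by auto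
    then show ?thesis using True by (simp only:) simp
  next
    case False
    with diff \<open>0 < \<mu> * h\<close> have "max 0 (mass 1 \<sigma> (c (2*k)) - mass (-1) \<sigma> (c (2*k))) = 0"
      "max 0 (mass (-1) \<sigma> (c (2*k)) - mass 1 \<sigma> (c (2*k))) = 4*\<mu>*h" by auto
    then show ?thesis using False by (simp only:) simp
  qed
qed

text \<open>If \<open>\<sigma> k\<close> holds, \<open>c (2k)\<close> is more likely under \<open>PX\<close>, so predicting label 1 there is the error.\<close>
definition cell_error :: "nat \<Rightarrow> ((nat \<Rightarrow> 'a) \<Rightarrow> (nat \<Rightarrow> bool) \<Rightarrow> 'a \<Rightarrow> bool) \<Rightarrow>
    (nat \<Rightarrow> bool) \<Rightarrow> (nat \<Rightarrow> bool) \<Rightarrow> nat \<Rightarrow> real" where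
  "cell_error n \<phi> \<sigma> ws k =
     (let q = prob_predicts n (PX \<sigma>) (PY \<sigma>) \<phi> ws (c (2*k)) in if \<sigma> k then q else 1 - q)"

lemma classification_excess_ge_cell_errors:
  assumes cl: "is_classifier n \<phi>" and w: "0 \<le> w" "w \<le> 1"
  shows "(\<Sum>ws\<in>PiE {..<n} (\<lambda>_. UNIV). label_weight w n ws * (\<Sum>k<K. 4*\<mu>*h * cell_error n \<phi> \<sigma> ws k))
    \<le> classification_excess n w \<phi> (PX \<sigma>) (PY \<sigma>)"
proof -
  define a where "a = mass 1 \<sigma>"
  define b where "b = mass (-1) \<sigma>"
  define q where "q = prob_predicts n (PX \<sigma>) (PY \<sigma>) \<phi>"
  define g where "g ws x = max 0 (a x - b x) * q ws x + max 0 (b x - a x) * (1 - q ws x)" for ws x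
  have g_nonneg: "0 \<le> g ws x" for ws x
    unfolding g_def q_def using prob_predicts_nonneg prob_predicts_le_1[OF borel_prob_PX borel_prob_PY]
    by (intro add_nonneg_nonneg mult_nonneg_nonneg) auto
  have g_cell: "g ws (c (2*k)) = 4*\<mu>*h * cell_error n \<phi> \<sigma> ws k" if "k < K" for ws k
    unfolding g_def a_def b_def q_def cell_error_def Let_def by (rule regret_at_cell[OF that])
  have inj: "inj_on (\<lambda>k. c (2*k)) {..<K}"
    using inj_onD[OF c_inj] by (intro inj_onI) fastforce
  have "(\<Sum>k<K. 4*\<mu>*h * cell_error n \<phi> \<sigma> ws k) \<le> (\<Sum>x\<in>support. g ws x)" for ws
  proof -
    have "(\<Sum>k<K. 4*\<mu>*h * cell_error n \<phi> \<sigma> ws k) = (\<Sum>k<K. g ws (c (2*k)))"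
      using g_cell by simp
    also have "\<dots> = (\<Sum>x\<in>(\<lambda>k. c (2*k)) ` {..<K}. g ws x)"
      by (simp add: sum.reindex[OF inj])
    also have "\<dots> \<le> (\<Sum>x\<in>support. g ws x)"
      using g_nonneg finite_support by (intro sum_mono2) (auto simp: support_def)
    finally show ?thesis .
  qed
  then have "(\<Sum>ws\<in>PiE {..<n} (\<lambda>_. UNIV). label_weight w n ws * (\<Sum>k<K. 4*\<mu>*h * cell_error n \<phi> \<sigma> ws k))
      \<le> (\<Sum>ws\<in>PiE {..<n} (\<lambda>_. UNIV). label_weight w n ws * (\<Sum>x\<in>support. g ws x))"
    using w by (intro sum_mono mult_left_mono label_weight_nonneg)
  also have "\<dots> \<le> classification_excess n w \<phi> (PX \<sigma>) (PY \<sigma>)"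
    unfolding g_def q_def a_def b_def using mass_nonneg sum_mass
    by (intro classification_excess_discrete_ge cl w finite_support) auto
  finally show ?thesis .
qed

text \<open>The two cells \<open>c (2k)\<close>, \<open>c (2k+1)\<close> have total mass \<open>2\<mu> = 1/(2K)\<close> under every hypothesis; for
  \<open>2n \<le> K\<close> the sample misses them with probability \<open>\<ge> 3/4\<close>, and off them \<open>\<sigma>\<close> and \<open>flip k \<sigma>\<close>
  agree.\<close>
lemma prob_predicts_flip_close:
  assumes cl: "is_classifier n \<phi>" and ws: "ws \<in> PiE {..<n} (\<lambda>_. UNIV)" and k: "k < K" and nK: "2*n \<le> K"
  shows "\<bar>prob_predicts n (PX \<sigma>) (PY \<sigma>) \<phi> ws x - prob_predicts n (PX (flip k \<sigma>)) (PY (flip k \<sigma>)) \<phi> ws x\<bar> \<le> 1/4"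
proof -
  define M where "M = (\<lambda>j. if ws j then PY \<sigma> else PX \<sigma>)"
  define M' where "M' = (\<lambda>j. if ws j then PY (flip k \<sigma>) else PX (flip k \<sigma>))"
  define C where "C = UNIV - {c (2*k), c (2*k+1)}"
  define E where "E = {zs \<in> space (PiM {..<n} M). \<phi> zs ws x}"
  have sets_M: "sets (M j) = sets borel" "sets (M' j) = sets borel" for j
    by (auto simp: M_def M'_def)
  have C: "C \<in> sets borel" unfolding C_def by (intro borel_open) auto
  have "{zs \<in> space (PiM {..<n} M). \<phi> zs ws x = True} \<in> sets (PiM {..<n} M)"
    using sets_sample_measure[OF borel_prob_PX borel_prob_PY]
    by (intro classifier_section_sets[OF cl ws]) (simp add: sample_measure_def M_def)
  moreover have "sets (PiM {..<n} M) = sets (PiM {..<n} (\<lambda>_. borel))"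
    using sets_M by (intro sets_PiM_cong) auto
  ultimately have E: "E \<in> sets (PiM {..<n} (\<lambda>_. borel))" by (simp add: E_def)
  have "\<bar>measure (PiM {..<n} M) E - measure (PiM {..<n} M') E\<bar> \<le> card {..<n} * (2*\<mu>)"
  proof (rule measure_PiM_diff_le[OF _ _ _ sets_M C _ _ _ _ _ E])
    show "prob_space (M i)" "prob_space (M' i)" for i
      using borel_prob_PX borel_prob_PY by (auto simp: M_def M'_def borel_prob_def)
    show "emeasure (M i) (A \<inter> C) = emeasure (M' i) (A \<inter> C)" if "A \<in> sets borel" for i A
    proof -
      have "A \<inter> C \<in> sets borel" using that C by blast
      moreover have "(\<Sum>x\<in>support \<inter> (A \<inter> C). ennreal (mass e \<sigma> x)) =
          (\<Sum>x\<in>support \<inter> (A \<inter> C). ennreal (mass e (flip k \<sigma>) x))" for e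
        using mass_flip[OF k] by (intro sum.cong) (auto simp: C_def)
      ultimately show ?thesis by (auto simp: M_def M'_def emeasure_discrete_measure finite_support)
    qed
    show "1 - 2*\<mu> \<le> measure (M i) C" "1 - 2*\<mu> \<le> measure (M' i) C" for i
      using measure_off_pair[OF k] by (auto simp: M_def M'_def C_def)
    show "0 \<le> 2*\<mu>" "2*\<mu> \<le> 1" using \<mu>_pos K by (auto simp: \<mu>_def field_simps)
  qed simp
  moreover have "real (card {..<n}) * (2*\<mu>) \<le> 1/4"
    using nK K by (simp add: \<mu>_def field_simps)
  moreover have "space (M j) = UNIV" "space (M' j) = UNIV" for j
    by (auto simp: M_def M'_def)
  then have "space (PiM {..<n} M') = space (PiM {..<n} M)"
    by (simp add: space_PiM)
  ultimately show ?thesis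
    by (simp add: prob_predicts_def sample_measure_def M_def M'_def E_def)
qed

lemma flip_in_hypercube: "k < K \<Longrightarrow> \<sigma> \<in> hypercube \<Longrightarrow> flip k \<sigma> \<in> hypercube"
  by (auto simp: flip_def PiE_iff extensional_def)

lemma flip_flip: "flip k (flip k \<sigma>) = \<sigma>"
  by (auto simp: flip_def)

lemma sum_cell_error_ge:
  assumes cl: "is_classifier n \<phi>" and ws: "ws \<in> PiE {..<n} (\<lambda>_. UNIV)" and k: "k < K" and nK: "2*n \<le> K"
  shows "3/8 * card hypercube \<le> (\<Sum>\<sigma>\<in>hypercube. cell_error n \<phi> \<sigma> ws k)"
proof -
  have pair: "3/4 \<le> cell_error n \<phi> \<sigma> ws k + cell_error n \<phi> (flip k \<sigma>) ws k" for \<sigma>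
  proof -
    have "flip k \<sigma> k = (\<not> \<sigma> k)" by (simp add: flip_def)
    then show ?thesis
      using prob_predicts_flip_close[OF cl ws k nK, of \<sigma> "c (2*k)"]
      unfolding cell_error_def Let_def abs_le_iff by (cases "\<sigma> k") auto
  qed
  have "(\<Sum>\<sigma>\<in>hypercube. cell_error n \<phi> (flip k \<sigma>) ws k) = (\<Sum>\<sigma>\<in>hypercube. cell_error n \<phi> \<sigma> ws k)"
    by (rule sum.reindex_bij_witness[where i="flip k" and j="flip k"])
      (auto simp: flip_flip flip_in_hypercube k)
  moreover have "(\<Sum>\<sigma>\<in>hypercube. 3/4) \<le> (\<Sum>\<sigma>\<in>hypercube. cell_error n \<phi> \<sigma> ws k + cell_error n \<phi> (flip k \<sigma>) ws k)"
    by (intro sum_mono pair)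
  ultimately show ?thesis by (simp add: sum.distrib)
qed

lemma sum_classification_excess_ge:
  assumes cl: "is_classifier n \<phi>" and w: "0 \<le> w" "w \<le> 1" and nK: "2*n \<le> K"
  shows "3/8 * h * card hypercube \<le> (\<Sum>\<sigma>\<in>hypercube. classification_excess n w \<phi> (PX \<sigma>) (PY \<sigma>))"
proof -
  let ?WS = "PiE {..<n} (\<lambda>_. UNIV :: bool set)" and ?lw = "label_weight w n"
  have lw: "(\<Sum>ws\<in>?WS. ?lw ws * z) = z" for z
    by (simp add: sum_distrib_right[symmetric] sum_label_weight)
  have cells: "(\<Sum>k<K. 4*\<mu>*h * (3/8 * card hypercube)) = 3/8 * h * card hypercube"
    using K by (simp add: \<mu>_def field_simps)
  have "3/8 * h * card hypercube = (\<Sum>ws\<in>?WS. ?lw ws * (\<Sum>k<K. 4*\<mu>*h * (3/8 * card hypercube)))"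
    unfolding cells lw ..
  also have "\<dots> \<le> (\<Sum>ws\<in>?WS. ?lw ws * (\<Sum>k<K. 4*\<mu>*h * (\<Sum>\<sigma>\<in>hypercube. cell_error n \<phi> \<sigma> ws k)))"
    using w \<mu>_pos hH sum_cell_error_ge[OF cl _ _ nK]
    by (intro sum_mono mult_left_mono label_weight_nonneg) auto
  also have "\<dots> = (\<Sum>\<sigma>\<in>hypercube. \<Sum>ws\<in>?WS. ?lw ws * (\<Sum>k<K. 4*\<mu>*h * cell_error n \<phi> \<sigma> ws k))"
    by (simp add: sum_distrib_left sum.swap[of _ hypercube])
  also have "\<dots> \<le> (\<Sum>\<sigma>\<in>hypercube. classification_excess n w \<phi> (PX \<sigma>) (PY \<sigma>))"
    by (intro sum_mono classification_excess_ge_cell_errors cl w)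
  finally show ?thesis .
qed


lemma regression_y0: "mass 1 \<sigma> y0 / (mass 1 \<sigma> y0 + mass (-1) \<sigma> y0) = 1/2 + H"
  by (simp add: mass_y0 field_simps)

lemma regression_z0: "mass 1 \<sigma> z0 / (mass 1 \<sigma> z0 + mass (-1) \<sigma> z0) = 1/2 - H"
  by (simp add: mass_z0 field_simps)

lemma regression_c:
  "i < 2*K \<Longrightarrow> mass 1 \<sigma> (c i) / (mass 1 \<sigma> (c i) + mass (-1) \<sigma> (c i)) = 1/2 + h * sign \<sigma> i"
  using \<mu>_pos by (simp add: mass_c field_simps)

end

locale separated_hypercube_family = hypercube_family +
  fixes Y :: "'a set" and C \<beta> :: real
  assumes support_subset: "support \<subseteq> Y" and Y_borel: "Y \<in> sets borel"
    and cells_far: "\<And>i j. i < 2*K \<Longrightarrow> j < 2*K \<Longrightarrow> i \<noteq> j \<Longrightarrow> 2*h \<le> C * dist (c i) (c j) powr \<beta>"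
    and cells_far_y0: "\<And>i. i < 2*K \<Longrightarrow> 2*H \<le> C * dist (c i) y0 powr \<beta>"
    and cells_far_z0: "\<And>i. i < 2*K \<Longrightarrow> 2*H \<le> C * dist (c i) z0 powr \<beta>"
    and anchors_far: "2*H \<le> C * dist y0 z0 powr \<beta>"
begin

lemma regression_holder:
  fixes \<sigma> defines "r \<equiv> \<lambda>x. mass 1 \<sigma> x / (mass 1 \<sigma> x + mass (-1) \<sigma> x)"
  assumes y: "y \<in> support" and z: "z \<in> support"
  shows "\<bar>r y - r z\<bar> \<le> C * dist y z powr \<beta>"
proof -
  have rc: "r (c i) = 1/2 + h * sign \<sigma> i" if "i < 2*K" for i
    unfolding r_def using that by (rule regression_c)
  have h_sign: "\<bar>h * sign \<sigma> i\<bar> = h" for i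
    using hH abs_sign[of \<sigma> i] by (simp add: abs_mult)
  have y0_z0: "\<bar>r y0 - r z0\<bar> \<le> C * dist y0 z0 powr \<beta>"
    using anchors_far hH by (simp add: r_def regression_y0 regression_z0)
  have c_y0: "\<bar>r (c i) - r y0\<bar> \<le> C * dist (c i) y0 powr \<beta>" if "i < 2*K" for i
    using rc[OF that] cells_far_y0[OF that] h_sign[of i] hH
    unfolding r_def regression_y0 abs_le_iff by linarith
  have c_z0: "\<bar>r (c i) - r z0\<bar> \<le> C * dist (c i) z0 powr \<beta>" if "i < 2*K" for i
    using rc[OF that] cells_far_z0[OF that] h_sign[of i] hH
    unfolding r_def regression_z0 abs_le_iff by linarith
  have c_c: "\<bar>r (c i) - r (c j)\<bar> \<le> C * dist (c i) (c j) powr \<beta>" if "i < 2*K" "j < 2*K" "i \<noteq> j" for i j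
    using rc[OF that(1)] rc[OF that(2)] cells_far[OF that] h_sign[of i] h_sign[of j]
    unfolding abs_le_iff by linarith
  show ?thesis
  proof (cases "y = z")
    case False
    then consider "y = y0" "z = z0" | "y = z0" "z = y0" | i where "i < 2*K" "y = c i" "z = y0"
      | i where "i < 2*K" "y = c i" "z = z0" | i where "i < 2*K" "z = c i" "y = y0"
      | i where "i < 2*K" "z = c i" "y = z0" | i j where "i < 2*K" "j < 2*K" "y = c i" "z = c j" "i \<noteq> j"
      using y z by (auto simp: support_def) metis
    then show ?thesis
      by cases (use y0_z0 c_y0 c_z0 c_c in \<open>auto simp: dist_commute abs_minus_commute\<close>)
  qed simp
qed

lemma in_model_class:
  assumes "\<kappa> \<le> H"
  shows "(PX \<sigma>, PY \<sigma>) \<in> model_class Y C \<beta> \<kappa>"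
proof -
  have nonneg: "\<And>x. x \<in> support \<Longrightarrow> 0 \<le> mass 1 \<sigma> x" "\<And>x. x \<in> support \<Longrightarrow> 0 \<le> mass (-1) \<sigma> x"
    by (simp_all add: mass_nonneg)
  have support: "support \<in> sets borel"
    using finite_support by (rule finite_imp_borel)
  have "measure (PX \<sigma>) Y = 1" "measure (PY \<sigma>) Y = 1"
    using support_subset Y_borel
    by (simp_all add: measure_discrete_measure finite_support nonneg sum_mass Int_absorb2)
  moreover have "\<kappa> \<le> tv_dist (PX \<sigma>) (PY \<sigma>)"
  proof -
    have "H = max 0 (mass 1 \<sigma> y0 - mass (-1) \<sigma> y0)"
      unfolding mass_y0 using hH by (simp add: max_def field_simps)
    also have "\<dots> \<le> (\<Sum>x\<in>support. max 0 (mass 1 \<sigma> x - mass (-1) \<sigma> x))"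
      by (rule member_le_sum) (auto simp: support_def finite_support)
    also have "\<dots> \<le> tv_dist (PX \<sigma>) (PY \<sigma>)"
      using finite_support nonneg borel_prob_PX borel_prob_PY by (rule tv_dist_discrete_measure_ge)
    finally show ?thesis using assms by linarith
  qed
  moreover have "measure (measure_add (PX \<sigma>) (PY \<sigma>)) support = 2"
    using support nonneg
    by (simp add: measure_add_discrete_measure finite_support measure_discrete_measure sum.distrib sum_mass)
  moreover have "enn2real (RN_deriv (measure_add (PX \<sigma>) (PY \<sigma>)) (PX \<sigma>) x) =
      mass 1 \<sigma> x / (mass 1 \<sigma> x + mass (-1) \<sigma> x)" if "x \<in> support" for x
    using that nonneg mass_pos[of 1] mass_pos[of "-1"]
    by (subst RN_deriv_discrete_measure) (auto intro: add_pos_pos finite_support)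
  ultimately show ?thesis
    unfolding model_class_def using borel_prob_PX borel_prob_PY support support_subset regression_holder
    by (auto intro!: bexI[of _ support])
qed

lemma excess_risk_ge:
  assumes "is_classifier n \<phi>" "0 \<le> w" "w \<le> 1" "2*n \<le> K" "\<kappa> \<le> H"
  shows "3/8 * h \<le> excess_risk Y C \<beta> \<kappa> n w \<phi>"
proof -
  have "3/8 * h * card hypercube \<le> (\<Sum>\<sigma>\<in>hypercube. classification_excess n w \<phi> (PX \<sigma>) (PY \<sigma>))"
    using assms(1-4) by (rule sum_classification_excess_ge)
  also have "\<dots> \<le> (\<Sum>\<sigma>\<in>hypercube. excess_risk Y C \<beta> \<kappa> n w \<phi>)"
    using assms(2,3,5) by (intro sum_mono classification_excess_le_excess_risk in_model_class)
  also have "\<dots> = card hypercube * excess_risk Y C \<beta> \<kappa> n w \<phi>"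
    by simp
  finally show ?thesis
    by (simp add: card_PiE mult.commute)
qed

end

section \<open>The logarithmic rate\<close>

lemma separated_cells:
  fixes Y :: "'a::metric_space set"
  assumes u: "u0 \<in> Y" "u1 \<in> Y" "u2 \<in> Y" "D \<le> dist u0 u1" "D \<le> dist u0 u2" "D \<le> dist u1 u2"
    and s: "0 < s" and cov: "6*K \<le> covering_number s Y"
  obtains y0 z0 c where "y0 \<in> Y" "z0 \<in> Y" "D \<le> dist y0 z0" "inj_on c {..<2*K}" "c ` {..<2*K} \<subseteq> Y"
    "\<And>i j. i < 2*K \<Longrightarrow> j < 2*K \<Longrightarrow> i \<noteq> j \<Longrightarrow> s \<le> dist (c i) (c j)"
    "\<And>i. i < 2*K \<Longrightarrow> D/2 \<le> dist (c i) y0 \<and> D/2 \<le> dist (c i) z0"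
proof -
  obtain F where F: "F \<subseteq> Y" "finite F" "card F = 6*K" "\<forall>x\<in>F. \<forall>y\<in>F. x \<noteq> y \<longrightarrow> s \<le> dist x y"
    using separated_subset_if_le_covering_number[OF s cov] by blast
  obtain y0 z0 G where yz: "(y0, z0) \<in> {(u0, u1), (u0, u2), (u1, u2)}" and G: "G \<subseteq> F" "card F \<le> 3 * card G"
      and far: "\<forall>x\<in>G. D/2 \<le> dist x y0 \<and> D/2 \<le> dist x z0"
    using far_from_some_pair[OF F(2) u(4-6)] by blast
  have "2*K \<le> card G" using G F(3) by simp
  then obtain G' where G': "G' \<subseteq> G" "card G' = 2*K" "finite G'"
    by (rule obtain_subset_with_card_n) (use F(2) G(1) finite_subset in blast)
  obtain c where "bij_betw c {0..<card G'} G'"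
    using ex_bij_betw_nat_finite[OF G'(3)] by blast
  then have c: "inj_on c {..<2*K}" "c ` {..<2*K} = G'"
    using G'(2) by (auto simp: bij_betw_def atLeast0LessThan)
  show ?thesis
  proof (rule that)
    show "y0 \<in> Y" "z0 \<in> Y" "D \<le> dist y0 z0" using yz u by auto
    show "inj_on c {..<2*K}" "c ` {..<2*K} \<subseteq> Y" using c G' G F by auto
    show "s \<le> dist (c i) (c j)" if "i < 2*K" "j < 2*K" "i \<noteq> j" for i j
      using F(4) c G' G that inj_onD[OF c(1), of i j] by auto
    show "D/2 \<le> dist (c i) y0 \<and> D/2 \<le> dist (c i) z0" if "i < 2*K" for i
      using far c G' that by auto
  qed
qed

lemma excess_risk_ge_at_scale:
  fixes Y :: "'a::metric_space set" and \<phi> :: "(nat \<Rightarrow> 'a) \<Rightarrow> (nat \<Rightarrow> bool) \<Rightarrow> 'a \<Rightarrow> bool"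
  assumes Y: "Y \<in> sets borel" and u: "u0 \<in> Y" "u1 \<in> Y" "u2 \<in> Y"
      "D \<le> dist u0 u1" "D \<le> dist u0 u2" "D \<le> dist u1 u2" and D: "D > 0"
    and s: "0 < s" and cov: "12*n+12 \<le> covering_number s Y"
    and H: "0 < H" "H \<le> 1/4" "2*H \<le> C * (D/2) powr \<beta>" and \<beta>: "\<beta> > 0" and C: "C > 0"
    and hH: "C * s powr \<beta> / 2 \<le> H" and \<kappa>: "\<kappa> \<le> H"
    and cl: "is_classifier n \<phi>" and w: "0 \<le> w" "w \<le> 1"
  shows "3/16 * C * s powr \<beta> \<le> excess_risk Y C \<beta> \<kappa> n w \<phi>"
proof -
  define K where "K = 2*n+2"
  define h where "h = C * s powr \<beta> / 2"
  obtain y0 z0 c where y0z0: "y0 \<in> Y" "z0 \<in> Y" "D \<le> dist y0 z0"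
    and c: "inj_on c {..<2*K}" "c ` {..<2*K} \<subseteq> Y"
    and cc: "\<And>i j. i < 2*K \<Longrightarrow> j < 2*K \<Longrightarrow> i \<noteq> j \<Longrightarrow> s \<le> dist (c i) (c j)"
    and far: "\<And>i. i < 2*K \<Longrightarrow> D/2 \<le> dist (c i) y0 \<and> D/2 \<le> dist (c i) z0"
    using separated_cells[OF u s, of K] cov by (auto simp: K_def)
  have holder_mono: "C * (D/2) powr \<beta> \<le> C * x powr \<beta>" if "D/2 \<le> x" for x
    using that D \<beta> C by (intro mult_left_mono powr_mono2) auto
  have "hypercube_family y0 z0 c K H h"
  proof
    show "0 < K" "inj_on c {..<2*K}" "y0 \<noteq> z0" using c y0z0 D by (auto simp: K_def)
    show "y0 \<notin> c ` {..<2*K}" "z0 \<notin> c ` {..<2*K}" using far D by force+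
    show "0 < h" "h \<le> H" "H \<le> 1/4" using C s hH H by (auto simp: h_def)
  qed
  then interpret separated_hypercube_family y0 z0 c K H h Y C \<beta>
  proof (rule separated_hypercube_family.intro, unfold_locales)
    show "hypercube_family.support y0 z0 c K \<subseteq> Y"
      using y0z0 c \<open>hypercube_family y0 z0 c K H h\<close> by (auto simp: hypercube_family.support_def)
    show "2*h \<le> C * dist (c i) (c j) powr \<beta>" if "i < 2*K" "j < 2*K" "i \<noteq> j" for i j
      using cc[OF that] s \<beta> C by (auto simp: h_def intro!: mult_left_mono powr_mono2)
    show "2*H \<le> C * dist (c i) y0 powr \<beta>" "2*H \<le> C * dist (c i) z0 powr \<beta>" if "i < 2*K" for i
      using far[OF that] holder_mono H(3) by force+
    show "2*H \<le> C * dist y0 z0 powr \<beta>"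
      using y0z0 D holder_mono[of "dist y0 z0"] H(3) by force
  qed (rule Y)
  have "3/8 * h \<le> excess_risk Y C \<beta> \<kappa> n w \<phi>"
    using cl w \<kappa> by (intro excess_risk_ge) (auto simp: K_def)
  then show ?thesis by (simp add: h_def)
qed

lemma exp_le_of_le_ln: "0 < t \<Longrightarrow> t \<le> ln (real k) \<Longrightarrow> exp t \<le> real k"
  by (cases "k = 0") (simp_all add: ln_ge_iff)

lemma three_separated_points:
  fixes Y :: "'a::metric_space set"
  assumes "0 < s" "3 \<le> covering_number s Y"
  obtains u0 u1 u2 where "u0 \<in> Y" "u1 \<in> Y" "u2 \<in> Y"
    "s \<le> dist u0 u1" "s \<le> dist u0 u2" "s \<le> dist u1 u2"
proof -
  obtain F where F: "F \<subseteq> Y" "finite F" "card F = 3" "\<forall>x\<in>F. \<forall>y\<in>F. x \<noteq> y \<longrightarrow> s \<le> dist x y"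
    by (rule separated_subset_if_le_covering_number[OF assms])
  obtain u0 u1 u2 where u: "F = {u0, u1, u2}" "u0 \<noteq> u1" "u1 \<noteq> u2" "u0 \<noteq> u2"
    using F(3) unfolding card_3_iff by blast
  then have mem: "u0 \<in> F" "u1 \<in> F" "u2 \<in> F" by auto
  show ?thesis
  proof (rule that)
    show "u0 \<in> Y" "u1 \<in> Y" "u2 \<in> Y" using mem F(1) by auto
    show "s \<le> dist u0 u1" "s \<le> dist u0 u2" "s \<le> dist u1 u2" using F(4) mem u(2-4) by blast+
  qed
qed

lemma covering_number_ge_3:
  assumes s0: "0 < s0" and c0: "0 < c0" and \<gamma>: "0 < \<gamma>"
    and cov: "\<And>s. 0 < s \<Longrightarrow> s < s0 \<Longrightarrow> c0 * s powr (-\<gamma>) \<le> ln (real (covering_number s Y))"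
  obtains s where "0 < s" "3 \<le> covering_number s Y"
proof -
  define s where "s = min (s0/2) ((c0/2) powr (1/\<gamma>))"
  have s: "0 < s" "s < s0" using s0 c0 by (auto simp: s_def)
  have "((c0/2) powr (1/\<gamma>)) powr (-\<gamma>) \<le> s powr (-\<gamma>)"
    using s \<gamma> by (intro powr_mono2') (auto simp: s_def)
  then have "2 / c0 \<le> s powr (-\<gamma>)"
    using \<gamma> c0 by (simp add: powr_powr powr_minus_divide)
  then have "2 \<le> c0 * s powr (-\<gamma>)"
    using c0 by (simp add: field_simps)
  then have "exp 2 \<le> exp (c0 * s powr (-\<gamma>))"
    by simp
  also have "\<dots> \<le> real (covering_number s Y)"
    using cov[OF s] c0 s by (intro exp_le_of_le_ln) auto
  finally have "exp 2 \<le> real (covering_number s Y)" .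
  moreover have "3 \<le> exp (2::real)"
    using exp_ge_add_one_self[of 2] by simp
  ultimately have "3 \<le> covering_number s Y"
    by simp
  with s(1) show ?thesis by (rule that)
qed

lemma eventually_log_scale_less:
  fixes c0 \<gamma> t :: real
  assumes c0: "0 < c0" and \<gamma>: "0 < \<gamma>" and t: "0 < t"
  shows "eventually (\<lambda>n. (c0 / ln (12 * real n + 12)) powr (1/\<gamma>) < t) sequentially"
proof -
  define T where "T = c0 / t powr \<gamma>"
  have T: "T > 0" using c0 t by (simp add: T_def)
  have "eventually (\<lambda>n. exp T < real n) sequentially"
    by (rule eventually_compose_filterlim[OF eventually_gt_at_top filterlim_real_sequentially])
  then show ?thesis
  proof eventually_elim
    case (elim n)
    have n: "0 < real n" using elim exp_gt_zero[of T] by linarith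
    then have "T < ln (real n)"
      using elim by (metis exp_less_cancel_iff exp_ln)
    also have "\<dots> \<le> ln (12 * real n + 12)"
      using n by (subst ln_le_cancel_iff) auto
    finally have L: "T < ln (12 * real n + 12)" .
    have "c0 / ln (12 * real n + 12) < c0 / T"
      using L T c0 by (intro divide_strict_left_mono) auto
    also have "c0 / T = t powr \<gamma>"
      using c0 t by (simp add: T_def)
    finally have "(c0 / ln (12 * real n + 12)) powr (1/\<gamma>) < (t powr \<gamma>) powr (1/\<gamma>)"
      using \<gamma> c0 L T by (intro powr_less_mono2) auto
    also have "\<dots> = t"
      using \<gamma> t by (simp add: powr_powr)
    finally show ?case .
  qed
qed

text \<open>The scale at which the packing bound provides \<open>12n + 12\<close> separated points.\<close>
lemma log_scale:
  fixes c0 \<gamma> \<beta> :: real and n :: nat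
  assumes c0: "0 < c0" and \<gamma>: "0 < \<gamma>" and \<beta>: "0 \<le> \<beta>" and n: "13 \<le> n"
  defines "s \<equiv> (c0 / ln (12 * real n + 12)) powr (1/\<gamma>)"
  shows "0 < s" and "c0 * s powr (-\<gamma>) = ln (12 * real n + 12)"
    and "(c0/2) powr (\<beta>/\<gamma>) \<le> ln (real n) powr (\<beta>/\<gamma>) * s powr \<beta>"
proof -
  define L where "L = ln (12 * real n + 12)"
  have L: "0 < L" by (simp add: L_def)
  show "0 < s" using L c0 by (simp add: s_def L_def)
  have "s powr (-\<gamma>) = (c0 / L) powr (-1)" using \<gamma> by (simp add: s_def L_def powr_powr)
  also have "\<dots> = L / c0" using L c0 by (simp add: powr_minus_divide)
  finally show "c0 * s powr (-\<gamma>) = ln (12 * real n + 12)" using c0 by (simp add: L_def)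
  have "13 * real n \<le> real n * real n"
    using n by (intro mult_right_mono) auto
  then have "12 * real n + 12 \<le> real n * real n"
    using n by linarith
  then have "L \<le> ln (real n * real n)"
    unfolding L_def using n by (subst ln_le_cancel_iff) auto
  also have "\<dots> = 2 * ln (real n)" using n by (simp add: ln_mult)
  finally have "c0 / 2 \<le> ln (real n) * (c0 / L)"
    using L c0 by (simp add: field_simps)
  then have "(c0/2) powr (\<beta>/\<gamma>) \<le> (ln (real n) * (c0 / L)) powr (\<beta>/\<gamma>)"
    using c0 \<beta> \<gamma> by (intro powr_mono2) auto
  also have "\<dots> = ln (real n) powr (\<beta>/\<gamma>) * (c0 / L) powr (\<beta>/\<gamma>)"
    by (rule powr_mult)
  also have "(c0 / L) powr (\<beta>/\<gamma>) = s powr \<beta>"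
    by (simp add: s_def L_def powr_powr)
  finally show "(c0/2) powr (\<beta>/\<gamma>) \<le> ln (real n) powr (\<beta>/\<gamma>) * s powr \<beta>" .
qed

lemma eventually_excess_risk_ge:
  fixes Y :: "'a::metric_space set" and \<phi> :: "nat \<Rightarrow> (nat \<Rightarrow> 'a) \<Rightarrow> (nat \<Rightarrow> bool) \<Rightarrow> 'a \<Rightarrow> bool"
  assumes Y: "Y \<in> sets borel" and s0: "0 < s0" and c0: "0 < c0" and \<gamma>: "0 < \<gamma>"
    and cov: "\<And>s. 0 < s \<Longrightarrow> s < s0 \<Longrightarrow> c0 * s powr (-\<gamma>) \<le> ln (real (covering_number s Y))"
    and u: "u0 \<in> Y" "u1 \<in> Y" "u2 \<in> Y" "D \<le> dist u0 u1" "D \<le> dist u0 u2" "D \<le> dist u1 u2" and D: "0 < D"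
    and H: "0 < H" "H \<le> 1/4" "2*H \<le> C * (D/2) powr \<beta>" and \<beta>: "0 < \<beta>" and C: "0 < C" and \<kappa>: "\<kappa> \<le> H"
    and cl: "\<And>n. is_classifier n (\<phi> n)" and w: "0 \<le> w" "w \<le> 1"
  shows "eventually (\<lambda>n. 3/16 * C * (c0/2) powr (\<beta>/\<gamma>) \<le> ln (real n) powr (\<beta>/\<gamma>) * excess_risk Y C \<beta> \<kappa> n w (\<phi> n))
    sequentially"
proof -
  have "eventually (\<lambda>n. (c0 / ln (12 * real n + 12)) powr (1/\<gamma>) < s0) sequentially"
    using c0 \<gamma> s0 by (rule eventually_log_scale_less)
  moreover have "eventually (\<lambda>n. (c0 / ln (12 * real n + 12)) powr (1/\<gamma>) < (2*H/C) powr (1/\<beta>)) sequentially"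
    using c0 \<gamma> H C by (intro eventually_log_scale_less) simp_all
  moreover have "eventually (\<lambda>n. 13 \<le> n) sequentially"
    by (rule eventually_ge_at_top)
  ultimately show ?thesis
  proof eventually_elim
    case (elim n)
    define s where "s = (c0 / ln (12 * real n + 12)) powr (1/\<gamma>)"
    note s = log_scale[OF c0 \<gamma> less_imp_le[OF \<beta>] elim(3), folded s_def]
    have "s < s0" using elim(1) by (simp add: s_def)
    with cov[OF s(1)] have "ln (12 * real n + 12) \<le> ln (real (covering_number s Y))"
      by (simp only: s(2))
    then have "exp (ln (12 * real n + 12)) \<le> real (covering_number s Y)"
      by (intro exp_le_of_le_ln) simp_all
    then have covering: "12*n+12 \<le> covering_number s Y" by simp
    have "s powr \<beta> < ((2*H/C) powr (1/\<beta>)) powr \<beta>"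
      using elim(2) s(1) \<beta> by (intro powr_less_mono2) (auto simp: s_def)
    then have "C * s powr \<beta> / 2 \<le> H"
      using \<beta> H C by (simp add: powr_powr field_simps)
    from excess_risk_ge_at_scale[OF Y u D s(1) covering H \<beta> C this \<kappa> cl w]
    have "3/16 * C * s powr \<beta> \<le> excess_risk Y C \<beta> \<kappa> n w (\<phi> n)" .
    then have "ln (real n) powr (\<beta>/\<gamma>) * (3/16 * C * s powr \<beta>) \<le> ln (real n) powr (\<beta>/\<gamma>) * excess_risk Y C \<beta> \<kappa> n w (\<phi> n)"
      by (intro mult_left_mono powr_ge_zero)
    moreover have "3/16 * C * (c0/2) powr (\<beta>/\<gamma>) \<le> ln (real n) powr (\<beta>/\<gamma>) * (3/16 * C * s powr \<beta>)"
      using s(3) C by (simp add: algebra_simps)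
    ultimately show ?case by linarith
  qed
qed

lemma liminf_ereal_pos_if_eventually_ge:
  fixes f :: "nat \<Rightarrow> real"
  assumes "0 < a" "eventually (\<lambda>n. a \<le> f n) sequentially"
  shows "0 < liminf (\<lambda>n. ereal (f n))"
proof -
  from assms(2) have "eventually (\<lambda>n. ereal a \<le> ereal (f n)) sequentially"
    by (rule eventually_mono) simp
  then have "ereal a \<le> liminf (\<lambda>n. ereal (f n))"
    by (rule Liminf_bounded)
  with assms(1) show ?thesis
    by (meson ereal_less(2) less_le_trans)
qed

theorem theorem4:
  fixes Y :: "'a::polish_space set"
    and s0 c0 c1 \<gamma> C \<beta> w :: real
  assumes "Y \<in> sets borel"
    and "s0 > 0" and "0 < c0" and "c0 < c1" and "\<gamma> > 0"
    and "\<And>s. 0 < s \<Longrightarrow> s < s0 \<Longrightarrow>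
           c0 * s powr (-\<gamma>) \<le> ln (real (covering_number s Y)) \<and>
           ln (real (covering_number s Y)) \<le> c1 * s powr (-\<gamma>)"
    and "C > 0" and "0 < \<beta>" and "\<beta> \<le> 1"
    and "0 < w" and "w < 1"
  shows "\<exists>\<kappa>0>0. \<forall>\<kappa>. 0 < \<kappa> \<and> \<kappa> < \<kappa>0 \<longrightarrow>
           (\<forall>\<phi> :: nat \<Rightarrow> (nat \<Rightarrow> 'a) \<Rightarrow> (nat \<Rightarrow> bool) \<Rightarrow> 'a \<Rightarrow> bool.
              (\<forall>n. is_classifier n (\<phi> n)) \<longrightarrow>
              0 < liminf (\<lambda>n. ereal (ln (real n) powr (\<beta> / \<gamma>) * excess_risk Y C \<beta> \<kappa> n w (\<phi> n))))"
proof -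
  note Y = assms(1) and s0 = assms(2) and c0 = assms(3) and \<gamma> = assms(5)
    and C = assms(7) and \<beta> = assms(8) and w = assms(10,11)
  have cov: "c0 * s powr (-\<gamma>) \<le> ln (real (covering_number s Y))" if "0 < s" "s < s0" for s
    using assms(6)[OF that] by blast
  obtain s1 where s1: "0 < s1" "3 \<le> covering_number s1 Y"
    using covering_number_ge_3[OF s0 c0 \<gamma> cov] by blast
  obtain u0 u1 u2 where u: "u0 \<in> Y" "u1 \<in> Y" "u2 \<in> Y" "s1 \<le> dist u0 u1" "s1 \<le> dist u0 u2" "s1 \<le> dist u1 u2"
    using three_separated_points[OF s1] by blast
  define H where "H = min (1/4) (C * (s1/2) powr \<beta> / 2)"
  have H: "0 < H" "H \<le> 1/4" "2*H \<le> C * (s1/2) powr \<beta>"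
    using C s1 by (auto simp: H_def)
  show ?thesis
  proof (intro exI[of _ H] conjI allI impI)
    fix \<kappa> :: real and \<phi> :: "nat \<Rightarrow> (nat \<Rightarrow> 'a) \<Rightarrow> (nat \<Rightarrow> bool) \<Rightarrow> 'a \<Rightarrow> bool"
    assume "0 < \<kappa> \<and> \<kappa> < H" and cl: "\<forall>n. is_classifier n (\<phi> n)"
    then have "\<kappa> \<le> H" by simp
    from eventually_excess_risk_ge[OF Y s0 c0 \<gamma> cov u s1(1) H \<beta> C this cl[rule_format]
        less_imp_le[OF w(1)] less_imp_le[OF w(2)]]
    show "0 < liminf (\<lambda>n. ereal (ln (real n) powr (\<beta>/\<gamma>) * excess_risk Y C \<beta> \<kappa> n w (\<phi> n)))"
      using C c0 by (intro liminf_ereal_pos_if_eventually_ge[of "3/16 * C * (c0/2) powr (\<beta>/\<gamma>)"]) simp_all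
  qed (rule H(1))
qed

end
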